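(* Let $k\ge0$, $f,g\in\mathbf P_k(\Gamma,\mathbb R^+;\mathbb C^3)$, and $\varphi\in C^\infty(\Gamma;\mathbb R^3)$ tangential ($\varphi\cdot n=0$). Then the problem: find $(u,v)\in C^\infty(\Gamma;C^\infty(\mathbb R^+))^2$ ($\mathbb C^3$-valued) with $$\partial_\eta v\times n+\tfrac1\omega u=e^{-\sqrt i\,\eta}f,\qquad -\partial_\eta u\times n+i\omega v=e^{-\sqrt i\,\eta}g\qquad\text{in }\Gamma\times\mathbb R^+,$$ $u(x_\Gamma,0)\times n=\varphi(x_\Gamma)$ for all $x_\Gamma\in\Gamma$, and $\int_0^\infty|u(x_\Gamma,\eta)|^2d\eta<\infty$, $\int_0^\infty|v(x_\Gamma,\eta)|^2d\eta<\infty$ for all $x_\Gamma\in\Gamma$, has a unique solution, and it is of the form $u=e^{-\sqrt i\,\eta}p$, $v=e^{-\sqrt i\,\eta}q$ with $p,q\in\mathbf P_{k+1}(\Gamma,\mathbb R^+;\mathbb C^3)$.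
   Context: $\Gamma$ is a smooth closed surface in $\mathbb R^3$ with unit normal field $n$; $\omega>0$; $\sqrt i:=\frac{\sqrt2}{2}(1+i)$. Functions are of $(x_\Gamma,\eta)\in\Gamma\times\mathbb R^+$. $\mathbf P_k(\Gamma,\mathbb R^+;\mathbb C^3)$ denotes the set of functions $u(x_\Gamma,\eta)=\sum_{j=0}^k a_j(x_\Gamma)\eta^j$ with $a_j\in C^\infty(\Gamma;\mathbb C^3)$. *)

theory Defs
  imports "HOL-Analysis.Analysis"
begin

fun dd :: "'a::real_normed_vector list \<Rightarrow> ('a \<Rightarrow> 'b::real_normed_vector) \<Rightarrow> 'a \<Rightarrow> 'b" where
  "dd [] f = f"
| "dd (v # vs) f = (\<lambda>x. frechet_derivative (dd vs f) (at x) v)"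

(* C^infinity on an open set S: all iterated directional derivatives exist and are
   (Frechet) differentiable on S; in finite dimension this is exactly C^infinity. *)
definition smooth_on :: "'a::real_normed_vector set \<Rightarrow> ('a \<Rightarrow> 'b::real_normed_vector) \<Rightarrow> bool" where
  "smooth_on S f \<longleftrightarrow> (\<forall>vs. \<forall>x\<in>S. dd vs f differentiable (at x))"

definition smooth_closed_surface :: "(real^3) set \<Rightarrow> bool" where
  "smooth_closed_surface \<Gamma> \<longleftrightarrow> compact \<Gamma> \<and> \<Gamma> \<noteq> {} \<and>
     (\<exists>F :: real^3 \<Rightarrow> real. smooth_on UNIV F \<and> \<Gamma> = {x. F x = 0} \<and>
        (\<forall>x\<in>\<Gamma>. frechet_derivative F (at x) \<noteq> (\<lambda>_. 0)))"

definition tangent_space :: "(real^3) set \<Rightarrow> real^3 \<Rightarrow> (real^3) set" where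
  "tangent_space \<Gamma> x = {t. \<exists>\<gamma> :: real \<Rightarrow> real^3. \<gamma> C1_differentiable_on UNIV \<and>
        range \<gamma> \<subseteq> \<Gamma> \<and> \<gamma> 0 = x \<and> vector_derivative \<gamma> (at 0) = t}"

(* C^infinity(\<Gamma>; V): restrictions to \<Gamma> of smooth functions on R^3 *)
definition smooth_on_surf :: "(real^3) set \<Rightarrow> (real^3 \<Rightarrow> 'b::real_normed_vector) \<Rightarrow> bool" where
  "smooth_on_surf \<Gamma> a \<longleftrightarrow> (\<exists>A. smooth_on UNIV A \<and> (\<forall>x\<in>\<Gamma>. a x = A x))"

definition unit_normal_field :: "(real^3) set \<Rightarrow> (real^3 \<Rightarrow> real^3) \<Rightarrow> bool" where
  "unit_normal_field \<Gamma> n \<longleftrightarrow> smooth_on_surf \<Gamma> n \<and>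
     (\<forall>x\<in>\<Gamma>. norm (n x) = 1 \<and> (\<forall>t\<in>tangent_space \<Gamma> x. n x \<bullet> t = 0))"

(* C^infinity(\<Gamma>; C^infinity(R^+)): functions on \<Gamma> \<times> [0,\<infinity>) that are restrictions of
   jointly smooth functions on R^3 \<times> R *)
definition smooth_surf_halfline :: "(real^3) set \<Rightarrow> (real^3 \<Rightarrow> real \<Rightarrow> 'b::real_normed_vector) \<Rightarrow> bool" where
  "smooth_surf_halfline \<Gamma> u \<longleftrightarrow>
     (\<exists>U :: (real^3) \<times> real \<Rightarrow> 'b. smooth_on UNIV U \<and> (\<forall>x\<in>\<Gamma>. \<forall>\<eta>\<ge>0. u x \<eta> = U (x, \<eta>)))"

definition poly_class :: "nat \<Rightarrow> (real^3) set \<Rightarrow> (real^3 \<Rightarrow> real \<Rightarrow> complex^3) \<Rightarrow> bool" where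
  "poly_class k \<Gamma> u \<longleftrightarrow> (\<exists>a :: nat \<Rightarrow> real^3 \<Rightarrow> complex^3.
      (\<forall>j\<le>k. smooth_on_surf \<Gamma> (a j)) \<and>
      (\<forall>x\<in>\<Gamma>. \<forall>\<eta>\<ge>0. u x \<eta> = (\<Sum>j\<le>k. (\<eta> ^ j) *\<^sub>R a j x)))"

definition ccross :: "complex^3 \<Rightarrow> complex^3 \<Rightarrow> complex^3" where
  "ccross x y = vector [x$2 * y$3 - x$3 * y$2, x$3 * y$1 - x$1 * y$3, x$1 * y$2 - x$2 * y$1]"

definition cvec :: "real^3 \<Rightarrow> complex^3" where
  "cvec v = (\<chi> i. complex_of_real (v $ i))"

definition sqrt_i :: complex where
  "sqrt_i = complex_of_real (sqrt 2 / 2) * (1 + \<i>)"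

definition edecay :: "real \<Rightarrow> complex" where
  "edecay \<eta> = exp (- sqrt_i * complex_of_real \<eta>)"

definition is_solution ::
  "(real^3) set \<Rightarrow> (real^3 \<Rightarrow> real^3) \<Rightarrow> real \<Rightarrow> (real^3 \<Rightarrow> real \<Rightarrow> complex^3) \<Rightarrow>
   (real^3 \<Rightarrow> real \<Rightarrow> complex^3) \<Rightarrow> (real^3 \<Rightarrow> real^3) \<Rightarrow>
   (real^3 \<Rightarrow> real \<Rightarrow> complex^3) \<Rightarrow> (real^3 \<Rightarrow> real \<Rightarrow> complex^3) \<Rightarrow> bool" where
  "is_solution \<Gamma> n \<omega> f g \<phi> u v \<longleftrightarrow>
     smooth_surf_halfline \<Gamma> u \<and> smooth_surf_halfline \<Gamma> v \<and>
     (\<forall>x\<in>\<Gamma>. \<forall>\<eta>>0.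
        ccross (vector_derivative (v x) (at \<eta>)) (cvec (n x)) + complex_of_real (1 / \<omega>) *s u x \<eta>
          = edecay \<eta> *s f x \<eta> \<and>
        - ccross (vector_derivative (u x) (at \<eta>)) (cvec (n x)) + (\<i> * complex_of_real \<omega>) *s v x \<eta>
          = edecay \<eta> *s g x \<eta>) \<and>
     (\<forall>x\<in>\<Gamma>. ccross (u x 0) (cvec (n x)) = cvec (\<phi> x)) \<and>
     (\<forall>x\<in>\<Gamma>. (\<integral>\<^sup>+ \<eta>\<in>{0..}. ennreal ((norm (u x \<eta>))\<^sup>2) \<partial>lborel) < \<infinity> \<and>
              (\<integral>\<^sup>+ \<eta>\<in>{0..}. ennreal ((norm (v x \<eta>))\<^sup>2) \<partial>lborel) < \<infinity>)"

end

theory Submission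
  imports Defs
begin

(*
  Boundary-layer problem: for each point x of the surface the system is an ODE in the
  normal variable eta with constant coefficients, so the proof works pointwise in x.

  Seek u = e^(-s eta) p, v = e^(-s eta) q with s = sqrt i and p, q
  polynomials of degree k + 1 in eta.  Dividing out the exponential turns the system into
  two coefficient identities involving the shifted derivative p' - s p.  These are solved
  explicitly: the normal part of p is read off from f, the tangential part is obtained by a
  finite downward recursion (the equation 2 s R_m = (m+1) R_(m+1) - h_m), and q is then
  determined by the second equation.  The coefficients are smooth because the class of
  smooth maps is closed under sums, bounded linear maps and bounded bilinear maps, and the
  resulting u, v are square integrable since |e^(-s eta)| = e^(-eta/sqrt 2).

  The difference (w, z) of two solutions solves the homogeneous system.  The
  combinations A = w_T + s omega (z x n) and B = w_T - s omega (z x n) of the tangential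
  parts satisfy A' = -s A and B' = s B.  The growing mode B must vanish because w and z are
  square integrable, and A(0) = 0 by the boundary condition; hence w = z = 0.

  Since the constructed solution has the stated form, uniqueness gives the representation
  of every solution.
*)

section \<open>Smooth maps\<close>

abbreviation smooth :: "('a::real_normed_vector \<Rightarrow> 'b::real_normed_vector) \<Rightarrow> bool" where
  "smooth f \<equiv> smooth_on UNIV f"

abbreviation dir_deriv :: "('a::real_normed_vector \<Rightarrow> 'b::real_normed_vector) \<Rightarrow> 'a \<Rightarrow> 'a \<Rightarrow> 'b" where
  "dir_deriv f v \<equiv> (\<lambda>x. frechet_derivative f (at x) v)"

lemma dd_append: "dd (vs @ ws) f = dd vs (dd ws f)"
  by (induction vs) auto

lemma smooth_differentiable: "smooth f \<Longrightarrow> f differentiable (at x)"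
  unfolding smooth_on_def by (metis UNIV_I dd.simps(1))

lemma smooth_dir_deriv: "smooth f \<Longrightarrow> smooth (dir_deriv f v)"
  unfolding smooth_on_def
proof (intro allI ballI)
  fix vs x assume "\<forall>vs. \<forall>x\<in>UNIV. dd vs f differentiable at x"
  then have "dd (vs @ [v]) f differentiable at x" by blast
  then show "dd vs (dir_deriv f v) differentiable at x" by (simp add: dd_append)
qed

lemma smooth_by_closure:
  assumes diff: "\<And>f x. f \<in> C \<Longrightarrow> f differentiable (at x)"
    and deriv: "\<And>f v. f \<in> C \<Longrightarrow> dir_deriv f v \<in> C"
    and f: "f \<in> C"
  shows "smooth f"
proof -
  have "dd vs f \<in> C" for vs by (induction vs) (auto simp: f deriv)
  then show ?thesis unfolding smooth_on_def using diff by blast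
qed

lemma frechet_derivative_eq: "(f has_derivative f') (at x) \<Longrightarrow> frechet_derivative f (at x) = f'"
  using frechet_derivative_at by metis

lemma smooth_affine:
  assumes "bounded_linear L"
  shows "smooth (\<lambda>x. L x + c)"
proof (rule smooth_by_closure[where C="{g. \<exists>L c. bounded_linear L \<and> g = (\<lambda>x. L x + c)}"])
  fix f x assume "f \<in> {g. \<exists>L c. bounded_linear L \<and> g = (\<lambda>x. L x + c)}"
  then obtain L c where L: "bounded_linear L" "f = (\<lambda>x. L x + c)" by blast
  show "f differentiable at x" unfolding L(2) using L(1)
    by (intro differentiable_add bounded_linear_imp_differentiable differentiable_const)
next
  fix f v assume "f \<in> {g. \<exists>L c. bounded_linear L \<and> g = (\<lambda>x. L x + c)}"
  then obtain L c where L: "bounded_linear L" "f = (\<lambda>x. L x + c)" by blast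
  have "frechet_derivative f (at x) = L" for x
    unfolding L(2) using has_derivative_add_const[OF bounded_linear_imp_has_derivative[OF L(1)]]
    by (intro frechet_derivative_eq) simp
  then have "dir_deriv f v = (\<lambda>x. (\<lambda>_. 0) x + L v)" by simp
  then show "dir_deriv f v \<in> {g. \<exists>L c. bounded_linear L \<and> g = (\<lambda>x. L x + c)}"
    using bounded_linear_zero by blast
qed (use assms in blast)

lemma smooth_const: "smooth (\<lambda>x. c)"
  using smooth_affine[of "\<lambda>_. 0" c] bounded_linear_zero by simp

lemma smooth_linear: "bounded_linear L \<Longrightarrow> smooth L"
  using smooth_affine[of L 0] by simp

lemma smooth_add:
  assumes "smooth f" "smooth g" shows "smooth (\<lambda>x. f x + g x)"
proof (rule smooth_by_closure[where C="{h. \<exists>f g. smooth f \<and> smooth g \<and> h = (\<lambda>x. f x + g x)}"])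
  fix h x assume "h \<in> {h. \<exists>f g. smooth f \<and> smooth g \<and> h = (\<lambda>x. f x + g x)}"
  then obtain f g where fg: "smooth f" "smooth g" "h = (\<lambda>x. f x + g x)" by blast
  show "h differentiable at x" unfolding fg(3)
    by (intro differentiable_add smooth_differentiable fg)
next
  fix h v assume "h \<in> {h. \<exists>f g. smooth f \<and> smooth g \<and> h = (\<lambda>x. f x + g x)}"
  then obtain f g where fg: "smooth f" "smooth g" "h = (\<lambda>x. f x + g x)" by blast
  have "frechet_derivative h (at x) =
      (\<lambda>v. frechet_derivative f (at x) v + frechet_derivative g (at x) v)" for x
    unfolding fg(3)
    by (intro frechet_derivative_eq has_derivative_add frechet_derivative_works[THEN iffD1]
        smooth_differentiable fg)
  then have "dir_deriv h v = (\<lambda>x. dir_deriv f v x + dir_deriv g v x)" by simp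
  then show "dir_deriv h v \<in> {h. \<exists>f g. smooth f \<and> smooth g \<and> h = (\<lambda>x. f x + g x)}"
    using smooth_dir_deriv fg by blast
qed (use assms in blast)

lemma smooth_linear_comp:
  assumes "bounded_linear L" "smooth f" shows "smooth (\<lambda>x. L (f x))"
proof (rule smooth_by_closure[where C="{h. \<exists>f. smooth f \<and> h = (\<lambda>x. L (f x))}"])
  fix h x assume "h \<in> {h. \<exists>f. smooth f \<and> h = (\<lambda>x. L (f x))}"
  then obtain f where f: "smooth f" "h = (\<lambda>x. L (f x))" by blast
  show "h differentiable at x" unfolding f(2)
    using differentiable_chain_at[OF smooth_differentiable[OF f(1)]
        bounded_linear_imp_differentiable[OF assms(1)]]
    by (simp add: o_def)
next
  fix h v assume "h \<in> {h. \<exists>f. smooth f \<and> h = (\<lambda>x. L (f x))}"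
  then obtain f where f: "smooth f" "h = (\<lambda>x. L (f x))" by blast
  have "frechet_derivative h (at x) = (\<lambda>v. L (frechet_derivative f (at x) v))" for x
    unfolding f(2)
    by (intro frechet_derivative_eq bounded_linear.has_derivative[OF assms(1)]
        frechet_derivative_works[THEN iffD1] smooth_differentiable f)
  then have "dir_deriv h v = (\<lambda>x. L (dir_deriv f v x))" by simp
  then show "dir_deriv h v \<in> {h. \<exists>f. smooth f \<and> h = (\<lambda>x. L (f x))}"
    using smooth_dir_deriv f by blast
qed (use assms in blast)

lemma smooth_comp_linear:
  assumes "bounded_linear L" "smooth f" shows "smooth (\<lambda>x. f (L x))"
proof (rule smooth_by_closure[where C="{h. \<exists>f. smooth f \<and> h = (\<lambda>x. f (L x))}"])
  fix h x assume "h \<in> {h. \<exists>f. smooth f \<and> h = (\<lambda>x. f (L x))}"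
  then obtain f where f: "smooth f" "h = (\<lambda>x. f (L x))" by blast
  show "h differentiable at x" unfolding f(2)
    using differentiable_chain_at[OF bounded_linear_imp_differentiable[OF assms(1)]
        smooth_differentiable[OF f(1)]]
    by (simp add: o_def)
next
  fix h v assume "h \<in> {h. \<exists>f. smooth f \<and> h = (\<lambda>x. f (L x))}"
  then obtain f where f: "smooth f" "h = (\<lambda>x. f (L x))" by blast
  have "frechet_derivative h (at x) = (\<lambda>v. frechet_derivative f (at (L x)) (L v))" for x
    unfolding f(2) using diff_chain_at[OF bounded_linear_imp_has_derivative[OF assms(1)]
        frechet_derivative_works[THEN iffD1, OF smooth_differentiable[OF f(1)]]]
    by (intro frechet_derivative_eq) (simp add: o_def)
  then have "dir_deriv h v = (\<lambda>x. dir_deriv f (L v) (L x))" by simp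
  then show "dir_deriv h v \<in> {h. \<exists>f. smooth f \<and> h = (\<lambda>x. f (L x))}"
    using smooth_dir_deriv f by blast
qed (use assms in blast)

text \<open>For a bounded bilinear map b, the derivatives of b(f, g) are sums of terms of the
  same shape (Leibniz rule), so the right class is the additive closure of such terms.\<close>

inductive_set bilinear_terms :: "('b::real_normed_vector \<Rightarrow> 'c::real_normed_vector \<Rightarrow> 'd::real_normed_vector) \<Rightarrow>
   ('a::real_normed_vector \<Rightarrow> 'd) set" for b where
  product: "smooth f \<Longrightarrow> smooth g \<Longrightarrow> (\<lambda>x. b (f x) (g x)) \<in> bilinear_terms b"
| sum: "F \<in> bilinear_terms b \<Longrightarrow> G \<in> bilinear_terms b \<Longrightarrow> (\<lambda>x. F x + G x) \<in> bilinear_terms b"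

lemma bilinear_terms_closed:
  assumes b: "bounded_bilinear b" and F: "F \<in> bilinear_terms b"
  shows "(\<forall>x. F differentiable at x) \<and> (\<forall>v. dir_deriv F v \<in> bilinear_terms b)"
  using F
proof induction
  case (product f g)
  have der: "((\<lambda>x. b (f x) (g x)) has_derivative
     (\<lambda>h. b (f x) (frechet_derivative g (at x) h) + b (frechet_derivative f (at x) h) (g x))) (at x)"
    for x
    by (intro bounded_bilinear.FDERIV[OF b] frechet_derivative_works[THEN iffD1]
        smooth_differentiable product)
  have "dir_deriv (\<lambda>x. b (f x) (g x)) v = (\<lambda>x. b (f x) (dir_deriv g v x) + b (dir_deriv f v x) (g x))"
    for v using frechet_derivative_eq[OF der] by simp
  moreover have "(\<lambda>x. b (f x) (dir_deriv g v x) + b (dir_deriv f v x) (g x)) \<in> bilinear_terms b" for v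
    by (intro bilinear_terms.sum bilinear_terms.product smooth_dir_deriv product)
  ultimately show ?case using der unfolding differentiable_def by auto
next
  case (sum F G)
  have "frechet_derivative (\<lambda>x. F x + G x) (at x) =
      (\<lambda>v. frechet_derivative F (at x) v + frechet_derivative G (at x) v)" for x
    using sum.IH by (intro frechet_derivative_eq has_derivative_add
        frechet_derivative_works[THEN iffD1]) auto
  then have "dir_deriv (\<lambda>x. F x + G x) v = (\<lambda>x. dir_deriv F v x + dir_deriv G v x)" for v by simp
  then show ?case using sum.IH by (auto intro: bilinear_terms.sum differentiable_add)
qed

lemma smooth_bilinear:
  assumes b: "bounded_bilinear b" and "smooth f" "smooth g"
  shows "smooth (\<lambda>x. b (f x) (g x))"
  using bilinear_terms_closed[OF b] assms(2,3)
  by (intro smooth_by_closure[where C="bilinear_terms b"] bilinear_terms.product) auto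

lemma smooth_sum:
  assumes "finite S" "\<And>i. i \<in> S \<Longrightarrow> smooth (f i)"
  shows "smooth (\<lambda>x. \<Sum>i\<in>S. f i x)"
  using assms by (induction S rule: finite_induct) (auto intro: smooth_add smooth_const)

lemma smooth_diff: "smooth f \<Longrightarrow> smooth g \<Longrightarrow> smooth (\<lambda>x. f x - g x)"
  using smooth_add[of f "\<lambda>x. - g x"] smooth_linear_comp[OF bounded_linear_minus[OF bounded_linear_ident], of g]
  by simp

lemma smooth_power: "smooth (\<lambda>t::real. t ^ j)"
proof (induction j)
  case (Suc j)
  have "smooth (\<lambda>t::real. t * t ^ j)"
    by (rule smooth_bilinear[OF bounded_bilinear_mult smooth_linear[OF bounded_linear_ident] Suc])
  then show ?case by simp
qed (simp add: smooth_const)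


section \<open>Algebra in complex three-space\<close>

text \<open>The complex-bilinear (not Hermitian) dot product; for the complexified real unit
  normal N it satisfies dotc N N = 1, and tang N w is the tangential part of w.\<close>

definition dotc :: "complex^3 \<Rightarrow> complex^3 \<Rightarrow> complex" where
  "dotc a b = a$1 * b$1 + a$2 * b$2 + a$3 * b$3"

definition tang :: "complex^3 \<Rightarrow> complex^3 \<Rightarrow> complex^3" where
  "tang N w = w - dotc w N *s N"

lemmas coordinate_simps = vec_eq_iff forall_3 ccross_def dotc_def tang_def

lemma ccross_add: "ccross (a + b) N = ccross a N + ccross b N"
  by (simp add: coordinate_simps algebra_simps)
lemma ccross_diff: "ccross (a - b) N = ccross a N - ccross b N"
  by (simp add: coordinate_simps algebra_simps)
lemma ccross_smult: "ccross (c *s a) N = c *s ccross a N"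
  by (simp add: coordinate_simps algebra_simps)
lemma ccross_self: "ccross N N = 0"
  by (simp add: coordinate_simps)
lemma ccross_zero [simp]: "ccross 0 N = 0"
  by (simp add: coordinate_simps)
lemma dotc_add: "dotc (a + b) N = dotc a N + dotc b N"
  by (simp add: coordinate_simps algebra_simps)
lemma dotc_diff: "dotc (a - b) N = dotc a N - dotc b N"
  by (simp add: coordinate_simps algebra_simps)
lemma dotc_smult: "dotc (c *s a) N = c * dotc a N"
  by (simp add: coordinate_simps algebra_simps)

lemma ccross_ccross: "ccross (ccross w N) N = dotc w N *s N - dotc N N *s w"
  by (simp add: coordinate_simps algebra_simps)
lemma ccross_ccross_left: "ccross (ccross N a) N = dotc N N *s a - dotc a N *s N"
  by (simp add: coordinate_simps algebra_simps)
lemma dotc_ccross: "dotc (ccross a N) N = 0"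
  by (simp add: coordinate_simps algebra_simps)
lemma dotc_ccross_left: "dotc (ccross N a) N = 0"
  by (simp add: coordinate_simps algebra_simps)

lemma tang_as_ccross: "dotc N N = 1 \<Longrightarrow> tang N v = - ccross (ccross v N) N"
  by (simp add: ccross_ccross tang_def)

lemma dotc_cvec: "dotc (cvec a) (cvec b) = complex_of_real (a \<bullet> b)"
  by (simp add: dotc_def cvec_def inner_vec_def sum_3)

lemma dotc_unit_normal: "norm a = 1 \<Longrightarrow> dotc (cvec a) (cvec a) = 1"
  by (simp add: dotc_cvec norm_eq_1)

lemma norm_cvec: "norm (cvec v) = norm v"
  unfolding norm_vec_def cvec_def by simp

lemma norm_smult: "norm (c *s (v::complex^3)) = norm c * norm v"
  unfolding norm_vec_def vector_smult_component norm_mult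
  by (simp add: L2_set_right_distrib[symmetric])

lemma complex_scaleR: "r *\<^sub>R (z::complex) = complex_of_real r * z"
  by (simp add: scaleR_conv_of_real)

lemma scaleR_as_smult: "(r::real) *\<^sub>R (v::complex^3) = complex_of_real r *s v"
  by (simp add: vec_eq_iff complex_scaleR)

lemma bounded_bilinear_ccross: "bounded_bilinear ccross"
  unfolding bilinear_conv_bounded_bilinear[symmetric] bilinear_def
  by (auto intro!: linearI simp: coordinate_simps algebra_simps complex_scaleR)
lemma bounded_bilinear_smult: "bounded_bilinear (\<lambda>(c::complex) (v::complex^3). c *s v)"
  unfolding bilinear_conv_bounded_bilinear[symmetric] bilinear_def
  by (auto intro!: linearI simp: coordinate_simps algebra_simps complex_scaleR)
lemma bounded_bilinear_dotc: "bounded_bilinear dotc"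
  unfolding bilinear_conv_bounded_bilinear[symmetric] bilinear_def
  by (auto intro!: linearI simp: coordinate_simps algebra_simps complex_scaleR)
lemma bounded_linear_cvec: "bounded_linear cvec"
  unfolding linear_conv_bounded_linear[symmetric]
  by (auto intro!: linearI simp: coordinate_simps cvec_def algebra_simps complex_scaleR)
lemma bounded_linear_tang: "bounded_linear (\<lambda>v. tang N v)"
  unfolding linear_conv_bounded_linear[symmetric]
  by (auto intro!: linearI simp: coordinate_simps algebra_simps complex_scaleR)

lemma smooth_ccross: "smooth f \<Longrightarrow> smooth g \<Longrightarrow> smooth (\<lambda>x. ccross (f x) (g x))"
  by (rule smooth_bilinear[OF bounded_bilinear_ccross])
lemma smooth_smult:
  fixes f :: "'a::real_normed_vector \<Rightarrow> complex" and g :: "'a \<Rightarrow> complex^3"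
  shows "smooth f \<Longrightarrow> smooth g \<Longrightarrow> smooth (\<lambda>x. f x *s g x)"
  by (rule smooth_bilinear[OF bounded_bilinear_smult])
lemma smooth_const_smult: "smooth (g::_\<Rightarrow>complex^3) \<Longrightarrow> smooth (\<lambda>x. (c::complex) *s g x)"
  by (rule smooth_smult[OF smooth_const])
lemma smooth_dotc: "smooth f \<Longrightarrow> smooth g \<Longrightarrow> smooth (\<lambda>x. dotc (f x) (g x))"
  by (rule smooth_bilinear[OF bounded_bilinear_dotc])
lemma smooth_cmult: "smooth f \<Longrightarrow> smooth g \<Longrightarrow> smooth (\<lambda>x. f x * (g x::complex))"
  by (rule smooth_bilinear[OF bounded_bilinear_mult])
lemma smooth_cvec: "smooth f \<Longrightarrow> smooth (\<lambda>x. cvec (f x))"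
  by (rule smooth_linear_comp[OF bounded_linear_cvec])
lemma smooth_tang: "smooth f \<Longrightarrow> smooth g \<Longrightarrow> smooth (\<lambda>x. tang (f x) (g x))"
  unfolding tang_def by (intro smooth_diff smooth_smult smooth_dotc)


section \<open>Polynomials in the normal variable\<close>

definition poly_eta :: "nat \<Rightarrow> (nat \<Rightarrow> complex^3) \<Rightarrow> real \<Rightarrow> complex^3" where
  "poly_eta K c t = (\<Sum>j\<le>K. (t ^ j) *\<^sub>R c j)"

lemma poly_eta_add: "poly_eta K (\<lambda>j. a j + b j) t = poly_eta K a t + poly_eta K b t"
  unfolding poly_eta_def by (simp add: scaleR_right_distrib sum.distrib)
lemma poly_eta_diff: "poly_eta K (\<lambda>j. a j - b j) t = poly_eta K a t - poly_eta K b t"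
  unfolding poly_eta_def by (simp add: scaleR_right_diff_distrib sum_subtractf)
lemma poly_eta_neg: "poly_eta K (\<lambda>j. - a j) t = - poly_eta K a t"
  unfolding poly_eta_def by (simp add: sum_negf)
lemma poly_eta_smult: "poly_eta K (\<lambda>j. c *s a j) t = c *s poly_eta K a t"
  unfolding poly_eta_def
  by (simp add: coordinate_simps sum_distrib_left complex_scaleR algebra_simps)
lemma poly_eta_ccross: "poly_eta K (\<lambda>j. ccross (a j) N) t = ccross (poly_eta K a t) N"
  unfolding poly_eta_def
  by (simp add: coordinate_simps sum_distrib_left sum_subtractf complex_scaleR algebra_simps)

lemma poly_eta_Suc: "c (Suc K) = 0 \<Longrightarrow> poly_eta (Suc K) c = poly_eta K c"
  unfolding poly_eta_def by (simp add: fun_eq_iff)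

lemma poly_eta_at_0: "poly_eta K c 0 = c 0"
proof -
  have "(\<Sum>j\<le>K. ((0::real) ^ j) *\<^sub>R c j) = (\<Sum>j\<le>K. if j = 0 then c j else 0)"
    by (rule sum.cong) (auto simp: power_0_left)
  then show ?thesis unfolding poly_eta_def by simp
qed

lemma poly_eta_deriv:
  "(poly_eta (Suc K) c has_vector_derivative poly_eta K (\<lambda>j. of_nat (Suc j) *\<^sub>R c (Suc j)) t) (at t)"
proof -
  have shift: "poly_eta (Suc K) c = (\<lambda>t. c 0 + (\<Sum>j\<le>K. (t ^ Suc j) *\<^sub>R c (Suc j)))"
    unfolding poly_eta_def sum.atMost_Suc_shift by simp
  have "((\<lambda>t. (t ^ Suc j) *\<^sub>R c (Suc j)) has_vector_derivative
        (of_nat (Suc j) * t ^ j) *\<^sub>R c (Suc j)) (at t)" for j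
    using has_vector_derivative_scaleR[OF DERIV_pow[of "Suc j" t] has_vector_derivative_const]
    by simp
  then have "((\<lambda>t. c 0 + (\<Sum>j\<le>K. (t ^ Suc j) *\<^sub>R c (Suc j))) has_vector_derivative
        0 + (\<Sum>j\<le>K. (of_nat (Suc j) * t ^ j) *\<^sub>R c (Suc j))) (at t)"
    by (intro has_vector_derivative_add has_vector_derivative_const has_vector_derivative_sum)
  then show ?thesis unfolding shift poly_eta_def by (simp add: mult.commute)
qed

lemma poly_eta_bound:
  assumes "t \<ge> 0"
  shows "norm (poly_eta K c t) \<le> (1 + t) ^ K * (\<Sum>j\<le>K. norm (c j))"
proof -
  have "norm (poly_eta K c t) \<le> (\<Sum>j\<le>K. norm ((t ^ j) *\<^sub>R c j))"
    unfolding poly_eta_def by (rule norm_sum)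
  also have "\<dots> \<le> (\<Sum>j\<le>K. (1 + t) ^ K * norm (c j))"
  proof (rule sum_mono)
    fix j assume "j \<in> {..K}"
    then have "t ^ j \<le> (1 + t) ^ j" "(1 + t) ^ j \<le> (1 + t) ^ K"
      using assms by (auto intro!: power_mono power_increasing)
    then show "norm ((t ^ j) *\<^sub>R c j) \<le> (1 + t) ^ K * norm (c j)"
      using assms by (auto intro!: mult_right_mono)
  qed
  finally show ?thesis by (simp add: sum_distrib_left)
qed

section \<open>The decaying exponential\<close>

text \<open>s = sqrt i is a square root of i of modulus one with positive real part
  1/sqrt 2, so e^(-s t) decays like e^(-t/sqrt 2).\<close>

lemma sqrt_i_sq: "sqrt_i * sqrt_i = \<i>"
proof -
  have half: "complex_of_real (sqrt 2 / 2) * complex_of_real (sqrt 2 / 2) = 1/2"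
    unfolding of_real_mult[symmetric] by simp
  have "sqrt_i * sqrt_i =
      (complex_of_real (sqrt 2 / 2) * complex_of_real (sqrt 2 / 2)) * ((1 + \<i>) * (1 + \<i>))"
    unfolding sqrt_i_def by (simp only: ac_simps)
  also have "\<dots> = \<i>" unfolding half by (simp add: algebra_simps)
  finally show ?thesis .
qed

lemma sqrt_i_nonzero: "sqrt_i \<noteq> 0"
  using sqrt_i_sq by auto

lemma norm_sqrt_i: "norm sqrt_i = 1"
  proof -
  have "norm sqrt_i = (sqrt 2 / 2) * cmod (1 + \<i>)" unfolding sqrt_i_def by (simp add: norm_mult)
  also have "cmod (1 + \<i>) = sqrt 2" by (simp add: cmod_def)
  finally show ?thesis by simp
qed

lemma norm_edecay: "norm (edecay t) = exp (- (sqrt 2 / 2) * t)"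
  unfolding edecay_def sqrt_i_def by simp

lemma cexp_deriv:
  "((\<lambda>t. exp (a * complex_of_real t)) has_vector_derivative (a * exp (a * complex_of_real t))) (at t)"
proof -
  have "((\<lambda>z. exp (a * z)) has_field_derivative (exp (a * of_real t) * a)) (at (of_real t))"
    by (auto intro!: derivative_eq_intros)
  from has_vector_derivative_real_field[OF this] show ?thesis by (simp add: mult.commute)
qed

lemma smooth_cexp: "smooth (\<lambda>t. exp (a * complex_of_real t))"
proof (rule smooth_by_closure[where C="{g. \<exists>c. g = (\<lambda>t. c * exp (a * complex_of_real t))}"])
  fix f x assume "f \<in> {g. \<exists>c. g = (\<lambda>t. c * exp (a * complex_of_real t))}"
  then obtain c where c: "f = (\<lambda>t. c * exp (a * complex_of_real t))" by blast
  have "(f has_vector_derivative c * (a * exp (a * complex_of_real t))) (at t)" for t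
    unfolding c by (intro has_vector_derivative_mult_right cexp_deriv)
  then show "f differentiable at x"
    unfolding has_vector_derivative_def differentiable_def by blast
  have "frechet_derivative f (at t) = (\<lambda>h. h *\<^sub>R (c * (a * exp (a * complex_of_real t))))" for t
    using \<open>(f has_vector_derivative _) (at t)\<close> frechet_derivative_eq
    unfolding has_vector_derivative_def by blast
  then have "dir_deriv f v = (\<lambda>t. (of_real v * c * a) * exp (a * complex_of_real t))" for v
    by (simp add: complex_scaleR algebra_simps)
  then show "dir_deriv f v \<in> {g. \<exists>c. g = (\<lambda>t. c * exp (a * complex_of_real t))}" for v
    by blast
qed (rule CollectI, rule exI[of _ 1], simp)

text \<open>The shifted derivative: multiplication by e^(-s eta) intertwines it with d/d eta,
  i.e.  (e^(-s eta) p)' = e^(-s eta) (p' - s p)  on coefficient sequences.\<close>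

definition shift_deriv :: "(nat \<Rightarrow> complex^3) \<Rightarrow> nat \<Rightarrow> complex^3" where
  "shift_deriv c j = of_nat (Suc j) *s c (Suc j) - sqrt_i *s c j"

lemma decaying_poly_deriv:
  assumes "c (Suc K) = 0"
  shows "((\<lambda>t. edecay t *s poly_eta K c t) has_vector_derivative
           edecay t *s poly_eta K (shift_deriv c) t) (at t)"
proof -
  have d1: "(edecay has_vector_derivative (- sqrt_i * edecay t)) (at t)"
    using cexp_deriv[of "- sqrt_i" t] unfolding edecay_def by simp
  have d2: "(poly_eta K c has_vector_derivative
      poly_eta K (\<lambda>j. of_nat (Suc j) *s c (Suc j)) t) (at t)"
    using poly_eta_deriv[of K c t] poly_eta_Suc[of c K, OF assms] by (simp add: scaleR_as_smult)
  from bounded_bilinear.has_vector_derivative[OF bounded_bilinear_smult d1 d2] show ?thesis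
    unfolding shift_deriv_def poly_eta_diff poly_eta_smult
    by (simp add: coordinate_simps algebra_simps)
qed

lemma smooth_decaying_poly:
  assumes "\<And>j. smooth (c j)"
  shows "smooth (\<lambda>z::(real^3)\<times>real. edecay (snd z) *s poly_eta K (\<lambda>j. c j (fst z)) (snd z))"
  unfolding poly_eta_def edecay_def
  by (intro smooth_smult smooth_sum smooth_bilinear[OF bounded_bilinear_scaleR]
      smooth_comp_linear[OF bounded_linear_snd] smooth_comp_linear[OF bounded_linear_fst]
      smooth_cexp smooth_power assms) simp

section \<open>Square integrability on the half-line\<close>

lemma poly_exp_bound:
  assumes "t \<ge> 0"
  shows "(1 + t) ^ m \<le> (2 * real m + 2) ^ m * exp ((1/2) * t)"
proof -
  define d where "d = 1 / (2 * real m + 2)"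
  have d: "0 < d" "d \<le> 1" "real m * d \<le> 1/2" unfolding d_def by (auto simp: field_simps)
  have "d * (1 + t) \<le> 1 + d * t" using d by (simp add: algebra_simps)
  also have "\<dots> \<le> exp (d * t)" by (rule exp_ge_add_one_self)
  finally have "1 + t \<le> exp (d * t) / d" using d by (simp add: field_simps)
  then have "(1 + t) ^ m \<le> (exp (d * t) / d) ^ m" using assms by (intro power_mono) auto
  also have "\<dots> = (1/d) ^ m * exp ((real m * d) * t)"
    by (simp add: power_divide exp_of_nat_mult[symmetric] field_simps)
  also have "\<dots> \<le> (1/d) ^ m * exp ((1/2) * t)"
    using d mult_right_mono[OF d(3) assms] by (intro mult_left_mono) auto
  finally show ?thesis unfolding d_def by simp
qed

text \<open>Decaying polynomials are square integrable on the half-line, being dominated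
  by a multiple of e^(-t/2).\<close>

lemma decaying_poly_L2:
  "(\<integral>\<^sup>+ t\<in>{0..}. ennreal ((norm (edecay t *s poly_eta K c t))\<^sup>2) \<partial>lborel) < \<infinity>"
proof -
  define C where "C = (\<Sum>j\<le>K. norm (c j))"
  define B where "B = C\<^sup>2 * (2 * real (2*K) + 2) ^ (2*K)"
  have B: "B \<ge> 0" unfolding B_def by simp
  have bound: "(norm (edecay t *s poly_eta K c t))\<^sup>2 \<le> B * exp (- (1/2) * t)" if t: "t \<ge> 0" for t
  proof -
    have "(norm (edecay t *s poly_eta K c t))\<^sup>2 = exp (- (sqrt 2 / 2) * t) ^ 2 * (norm (poly_eta K c t))\<^sup>2"
      by (simp add: norm_smult norm_edecay power_mult_distrib)
    also have "\<dots> \<le> exp (- (sqrt 2 / 2) * t) ^ 2 * ((1 + t) ^ K * C)\<^sup>2"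
      using poly_eta_bound[OF t, of K c] by (intro mult_left_mono power_mono) (auto simp: C_def)
    also have "\<dots> = C\<^sup>2 * (exp (- (sqrt 2) * t) * (1 + t) ^ (2*K))"
      by (simp add: power_mult_distrib power_mult exp_double[symmetric] algebra_simps
          flip: exp_of_nat_mult)
    also have "\<dots> \<le> C\<^sup>2 * (exp (- (sqrt 2) * t) * ((2 * real (2*K) + 2) ^ (2*K) * exp ((1/2) * t)))"
      using poly_exp_bound[OF t, of "2*K"] by (intro mult_left_mono) auto
    also have "\<dots> = B * exp (- (sqrt 2 - 1/2) * t)"
      unfolding B_def by (simp add: exp_add[symmetric] algebra_simps)
    also have "\<dots> \<le> B * exp (- (1/2) * t)"
    proof -
      have "(1/2) * t \<le> (sqrt 2 - 1/2) * t" using t by (intro mult_right_mono) auto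
      then have "- (sqrt 2 - 1/2) * t \<le> - (1/2) * t" by (simp only: mult_minus_left neg_le_iff_le)
      then show ?thesis using B by (intro mult_left_mono) auto
    qed
    finally show ?thesis .
  qed
  have exp_integral: "((\<lambda>t. B * exp (- (1/2) * t)) has_integral B * (exp (- (1/2) * 0) / (1/2))) {0..}"
    by (intro has_integral_mult_right has_integral_exp_minus_to_infinity) simp
  have "(\<integral>\<^sup>+ t\<in>{0..}. ennreal ((norm (edecay t *s poly_eta K c t))\<^sup>2) \<partial>lborel)
        \<le> (\<integral>\<^sup>+ t. ennreal (B * exp (- (1/2) * t)) * indicator {0..} t \<partial>lborel)"
    using bound by (intro nn_integral_mono) (auto simp: indicator_def intro: ennreal_leI)
  also have "\<dots> = ennreal (B * (exp (- (1/2) * 0) / (1/2)))"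
    by (rule nn_integral_has_integral_lebesgue'[OF _ exp_integral]) (use B in auto)
  also have "\<dots> < \<infinity>" by simp
  finally show ?thesis .
qed

lemma emeasure_lborel_Ioi: "emeasure lborel {0::real<..} = \<infinity>"
proof (rule ccontr)
  assume "emeasure lborel {0::real<..} \<noteq> \<infinity>"
  then obtain m where m: "emeasure lborel {0::real<..} = ennreal m" "m \<ge> 0"
    by (cases "emeasure lborel {0::real<..}") auto
  have "emeasure lborel {1..m+2} \<le> emeasure lborel {0::real<..}" by (rule emeasure_mono) auto
  then have "ennreal (m+1) \<le> ennreal m" using m by simp
  then show False using m by (simp add: ennreal_le_iff)
qed

text \<open>A constant that is dominated by a square integrable function on the half-line is
  zero; this excludes the exponentially growing mode in the uniqueness proof.\<close>

lemma dominated_constant_zero: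
  fixes c :: "'a::real_normed_vector" and h :: "real \<Rightarrow> real"
  assumes bound: "\<And>t. t > 0 \<Longrightarrow> norm c \<le> h t"
    and L2: "(\<integral>\<^sup>+ t\<in>{0..}. ennreal ((h t)\<^sup>2) \<partial>lborel) < \<infinity>"
  shows "c = 0"
proof (rule ccontr)
  assume "c \<noteq> 0"
  have "(\<integral>\<^sup>+ (t::real). ennreal ((norm c)\<^sup>2) * indicator {0<..} t \<partial>lborel)
      = ennreal ((norm c)\<^sup>2) * emeasure lborel {0::real<..}"
    by (rule nn_integral_cmult_indicator) simp
  then have "\<infinity> = (\<integral>\<^sup>+ (t::real). ennreal ((norm c)\<^sup>2) * indicator {0<..} t \<partial>lborel)"
    using \<open>c \<noteq> 0\<close> by (simp add: emeasure_lborel_Ioi ennreal_mult_top)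
  also have "\<dots> \<le> (\<integral>\<^sup>+ t\<in>{0..}. ennreal ((h t)\<^sup>2) \<partial>lborel)"
  proof (rule nn_integral_mono)
    fix t :: real
    have "(norm c)\<^sup>2 \<le> (h t)\<^sup>2" if "t > 0" using bound[OF that] by (intro power_mono) auto
    then show "ennreal ((norm c)\<^sup>2) * indicator {0<..} t \<le> ennreal ((h t)\<^sup>2) * indicator {0..} t"
      by (cases "t > 0") (auto simp: indicator_def intro: ennreal_leI)
  qed
  finally show False using L2 by simp
qed

section \<open>The coefficient recursion\<close>

text \<open>Solution of the recursion  2 s R_j = (j+1) R_(j+1) - h_j  (s = sqrt i) with
  R_j = 0 for j > k, computed downwards from j = k: desc_rec h k d is R_(k+1-d).\<close>

fun desc_rec :: "(nat \<Rightarrow> complex^3) \<Rightarrow> nat \<Rightarrow> nat \<Rightarrow> complex^3" where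
  "desc_rec h k 0 = 0"
| "desc_rec h k (Suc d) = (1 / (2 * sqrt_i)) *s (of_nat (k - d + 1) *s desc_rec h k d - h (k - d))"

definition rec_solution :: "(nat \<Rightarrow> complex^3) \<Rightarrow> nat \<Rightarrow> nat \<Rightarrow> complex^3" where
  "rec_solution h k j = (if j \<le> k then desc_rec h k (k + 1 - j) else 0)"

lemma rec_solution_eq:
  assumes "\<And>m. m > k \<Longrightarrow> h m = 0"
  shows "(2 * sqrt_i) *s rec_solution h k j = of_nat (j+1) *s rec_solution h k (j+1) - h j"
proof (cases "j \<le> k")
  case True
  have next_term: "rec_solution h k (j+1) = desc_rec h k (k - j)"
    using True by (cases "j = k") (auto simp: rec_solution_def)
  have "k + 1 - j = Suc (k - j)" "k - (k - j) = j" using True by auto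
  then have "rec_solution h k j =
      (1 / (2 * sqrt_i)) *s (of_nat (j + 1) *s desc_rec h k (k - j) - h j)"
    unfolding rec_solution_def using True by simp
  then show ?thesis unfolding next_term using sqrt_i_nonzero by (simp add: vector_smult_assoc)
next
  case False
  then show ?thesis using assms[of j] by (simp add: rec_solution_def)
qed

lemma rec_solution_tangential:
  assumes "\<And>m. dotc (h m) N = 0" shows "dotc (rec_solution h k j) N = 0"
proof -
  have "dotc (desc_rec h k d) N = 0" for d
  proof (induction d)
    case (Suc d)
    show ?case unfolding desc_rec.simps dotc_smult dotc_diff Suc assms by simp
  qed (simp add: dotc_def)
  then show ?thesis by (simp add: rec_solution_def coordinate_simps)
qed

lemma smooth_rec_solution:
  assumes "\<And>m. smooth (\<lambda>x. h x m)" shows "smooth (\<lambda>x. rec_solution (h x) k j)"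
proof -
  have "smooth (\<lambda>x. desc_rec (h x) k d)" for d
  proof (induction d)
    case (Suc d)
    show ?case unfolding desc_rec.simps by (intro smooth_const_smult smooth_diff Suc assms)
  qed (simp add: smooth_const)
  then show ?thesis by (cases "j \<le> k") (simp_all add: rec_solution_def smooth_const)
qed

text \<open>Given the unit normal N, the coefficients F, G of the
  right-hand sides (vanishing above degree k) and the boundary datum Phi, the coefficients of
  p are: normal part w (F_j . N) N, and tangential part r_j with r_0 = N x Phi and
  (j+1) r_(j+1) = R_j for the solution R of the recursion driven by layer_rhs.  The
  coefficients of q are then given by the second equation.\<close>

definition layer_rhs :: "complex \<Rightarrow> complex^3 \<Rightarrow> (nat \<Rightarrow> complex^3) \<Rightarrow> (nat \<Rightarrow> complex^3) \<Rightarrow> nat \<Rightarrow> complex^3" where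
  "layer_rhs w N F G m = ccross (shift_deriv G m) N - (\<i> * w) *s tang N (F m)"

definition layer_tang :: "complex \<Rightarrow> complex^3 \<Rightarrow> nat \<Rightarrow> (nat \<Rightarrow> complex^3) \<Rightarrow> (nat \<Rightarrow> complex^3) \<Rightarrow>
    complex^3 \<Rightarrow> nat \<Rightarrow> complex^3" where
  "layer_tang w N k F G \<Phi> j =
     (if j = 0 then ccross N \<Phi> else (1 / of_nat j) *s rec_solution (layer_rhs w N F G) k (j - 1))"

definition layer_u :: "complex \<Rightarrow> complex^3 \<Rightarrow> nat \<Rightarrow> (nat \<Rightarrow> complex^3) \<Rightarrow> (nat \<Rightarrow> complex^3) \<Rightarrow>
    complex^3 \<Rightarrow> nat \<Rightarrow> complex^3" where
  "layer_u w N k F G \<Phi> j = layer_tang w N k F G \<Phi> j + (w * dotc (F j) N) *s N"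

definition layer_v :: "complex \<Rightarrow> complex^3 \<Rightarrow> nat \<Rightarrow> (nat \<Rightarrow> complex^3) \<Rightarrow> (nat \<Rightarrow> complex^3) \<Rightarrow>
    complex^3 \<Rightarrow> nat \<Rightarrow> complex^3" where
  "layer_v w N k F G \<Phi> j =
     (1 / (\<i> * w)) *s (G j + ccross (shift_deriv (layer_u w N k F G \<Phi>) j) N)"

lemma shift_deriv_affine:
  "shift_deriv (\<lambda>m. c *s (A m + ccross (B m) N)) j = c *s (shift_deriv A j + ccross (shift_deriv B j) N)"
  by (simp add: shift_deriv_def coordinate_simps algebra_simps)

lemma tang_shift_deriv: "tang N (shift_deriv c j) = shift_deriv (\<lambda>m. tang N (c m)) j"
  by (simp add: shift_deriv_def coordinate_simps algebra_simps)

text \<open>Its tangential part reduces, via the double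
  cross product, to  (shift_deriv o shift_deriv) r = h + i r, which is the recursion for R;
  its normal part holds by the choice of the normal part of p.\<close>

lemma first_equation_coeffs:
  fixes P Q F G r R h :: "nat \<Rightarrow> complex^3"
  assumes NN: "dotc N N = 1" and w: "w \<noteq> 0"
    and Q: "\<And>m. Q m = (1/(\<i>*w)) *s (G m + ccross (shift_deriv P m) N)"
    and P: "\<And>m. P m = r m + (w * dotc (F m) N) *s N"
    and r_tangential: "\<And>m. dotc (r m) N = 0"
    and r_R: "\<And>m. of_nat (m+1) *s r (m+1) = R m"
    and R_rec: "\<And>m. (2 * sqrt_i) *s R m = of_nat (m+1) *s R (m+1) - h m"
    and h: "\<And>m. h m = ccross (shift_deriv G m) N - (\<i>*w) *s tang N (F m)"
  shows "ccross (shift_deriv Q j) N + (1/w) *s P j = F j"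
proof -
  have tang_P: "tang N (P m) = r m" for m
    unfolding tang_def P by (simp add: dotc_add dotc_smult r_tangential NN)
  have "Q = (\<lambda>m. (1/(\<i>*w)) *s (G m + ccross (shift_deriv P m) N))" using Q by auto
  then have Q': "shift_deriv Q j =
      (1/(\<i>*w)) *s (shift_deriv G j + ccross (shift_deriv (shift_deriv P) j) N)"
    by (simp only: shift_deriv_affine)
  have dQ: "ccross (shift_deriv Q j) N =
      (1/(\<i>*w)) *s (ccross (shift_deriv G j) N - tang N (shift_deriv (shift_deriv P) j))"
    unfolding Q' ccross_smult ccross_add ccross_ccross NN tang_def by (simp add: algebra_simps)
  have "tang N (shift_deriv (shift_deriv P) j) = shift_deriv (shift_deriv r) j"
    by (simp add: tang_shift_deriv tang_P)
  also have "\<dots> = of_nat (j+1) *s (of_nat (j+2) *s r (j+2)) - of_nat (j+1) *s (sqrt_i *s r (j+1))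
      - sqrt_i *s (of_nat (j+1) *s r (j+1)) + sqrt_i *s (sqrt_i *s r j)"
    by (simp add: shift_deriv_def vector_ssub_ldistrib add.commute)
  also have "\<dots> = of_nat (j+1) *s R (j+1) - sqrt_i *s R j - sqrt_i *s R j + sqrt_i *s (sqrt_i *s r j)"
  proof -
    have R_next: "of_nat (j+2) *s r (j+2) = R (j+1)" using r_R[of "j+1"] by (simp add: add.commute)
    have R_here: "of_nat (j+1) *s r (j+1) = R j" using r_R[of j] by simp
    have R_here_scaled: "of_nat (j+1) *s (sqrt_i *s r (j+1)) = sqrt_i *s R j"
      using R_here by (metis mult.commute vector_smult_assoc)
    show ?thesis by (simp only: R_next R_here R_here_scaled)
  qed
  also have "\<dots> = of_nat (j+1) *s R (j+1) - (2 * sqrt_i) *s R j + (sqrt_i * sqrt_i) *s r j"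
    by (simp add: coordinate_simps algebra_simps)
  also have "\<dots> = h j + \<i> *s r j"
    using R_rec[of j] by (simp add: sqrt_i_sq)
  finally have tang_ddP: "tang N (shift_deriv (shift_deriv P) j) = h j + \<i> *s r j" .
  have dG: "ccross (shift_deriv G j) N = h j + (\<i>*w) *s tang N (F j)"
    using h[of j] by simp
  show ?thesis
    unfolding dQ tang_ddP dG P using w by (simp add: coordinate_simps field_simps)
qed

lemma layer_coefficients:
  fixes F G :: "nat \<Rightarrow> complex^3"
  assumes NN: "dotc N N = 1" and w: "w \<noteq> 0"
    and F_deg: "\<And>m. m > k \<Longrightarrow> F m = 0" and G_deg: "\<And>m. m > k \<Longrightarrow> G m = 0"
    and \<Phi>: "dotc \<Phi> N = 0"
  defines "U \<equiv> layer_u w N k F G \<Phi>" and "V \<equiv> layer_v w N k F G \<Phi>"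
  shows "ccross (shift_deriv V j) N + (1/w) *s U j = F j"
    and "- ccross (shift_deriv U j) N + (\<i> * w) *s V j = G j"
    and "ccross (U 0) N = \<Phi>"
    and "j \<ge> k + 2 \<Longrightarrow> U j = 0"
    and "j \<ge> k + 2 \<Longrightarrow> V j = 0"
proof -
  let ?h = "layer_rhs w N F G" and ?r = "layer_tang w N k F G \<Phi>"
  let ?R = "\<lambda>j. rec_solution ?h k j"
  have h_deg: "?h m = 0" if "m > k" for m
    using that F_deg G_deg by (simp add: layer_rhs_def shift_deriv_def tang_def dotc_def)
  have h_tangential: "dotc (?h m) N = 0" for m
    unfolding layer_rhs_def tang_def using NN by (simp add: dotc_diff dotc_smult dotc_ccross)
  have r_tangential: "dotc (?r m) N = 0" for m
    using rec_solution_tangential[of ?h N, OF h_tangential]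
    by (simp add: layer_tang_def dotc_smult dotc_ccross_left)
  have r_R: "of_nat (m+1) *s ?r (m+1) = ?R m" for m
  proof -
    have "complex_of_nat (Suc m) \<noteq> 0" by (simp only: of_nat_eq_0_iff)
    then show ?thesis by (simp add: layer_tang_def vector_smult_assoc)
  qed
  have R_rec: "(2 * sqrt_i) *s ?R m = of_nat (m+1) *s ?R (m+1) - ?h m" for m
    by (rule rec_solution_eq) (use h_deg in auto)
  show "ccross (shift_deriv V j) N + (1/w) *s U j = F j"
  proof (rule first_equation_coeffs[where r="?r" and R="?R" and h="?h" and G=G])
    show "U m = ?r m + (w * dotc (F m) N) *s N" for m by (simp add: U_def layer_u_def)
    show "V m = (1/(\<i>*w)) *s (G m + ccross (shift_deriv U m) N)" for m
      by (simp add: U_def V_def layer_v_def)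
  qed (use NN w r_tangential r_R R_rec in \<open>simp_all add: layer_rhs_def\<close>)
  show "- ccross (shift_deriv U j) N + (\<i> * w) *s V j = G j"
    using w by (simp add: U_def V_def layer_v_def vector_smult_assoc)
  show "ccross (U 0) N = \<Phi>"
    using NN \<Phi> by (simp add: U_def layer_u_def layer_tang_def ccross_add ccross_smult
        ccross_self ccross_ccross_left)
  show U_deg: "U j = 0" if "j \<ge> k + 2" for j
  proof -
    have "j \<noteq> 0" "\<not> j - 1 \<le> k" "F j = 0" using that F_deg[of j] by auto
    then show ?thesis by (simp add: U_def layer_u_def layer_tang_def rec_solution_def dotc_def)
  qed
  show "V j = 0" if "j \<ge> k + 2"
    using that U_deg G_deg[of j] by (simp add: V_def layer_v_def shift_deriv_def U_def)
qed

lemma decaying_poly_solution: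
  assumes U_deg: "U (Suc K) = 0" and V_deg: "V (Suc K) = 0"
    and eq1: "\<And>j. ccross (shift_deriv V j) N + (1/w) *s U j = F j"
    and eq2: "\<And>j. - ccross (shift_deriv U j) N + (\<i> * w) *s V j = G j"
  defines "u \<equiv> \<lambda>t. edecay t *s poly_eta K U t" and "v \<equiv> \<lambda>t. edecay t *s poly_eta K V t"
  shows "ccross (vector_derivative v (at t)) N + (1/w) *s u t = edecay t *s poly_eta K F t"
    and "- ccross (vector_derivative u (at t)) N + (\<i> * w) *s v t = edecay t *s poly_eta K G t"
proof -
  have du: "vector_derivative u (at t) = edecay t *s poly_eta K (shift_deriv U) t"
    unfolding u_def by (rule vector_derivative_at[OF decaying_poly_deriv[of U, OF U_deg]])
  have dv: "vector_derivative v (at t) = edecay t *s poly_eta K (shift_deriv V) t"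
    unfolding v_def by (rule vector_derivative_at[OF decaying_poly_deriv[of V, OF V_deg]])
  have "ccross (vector_derivative v (at t)) N + (1/w) *s u t =
      edecay t *s poly_eta K (\<lambda>j. ccross (shift_deriv V j) N + (1/w) *s U j) t"
    unfolding dv u_def poly_eta_add poly_eta_smult poly_eta_ccross
    by (simp add: coordinate_simps algebra_simps)
  then show "ccross (vector_derivative v (at t)) N + (1/w) *s u t = edecay t *s poly_eta K F t"
    by (simp only: eq1)
  have "- ccross (vector_derivative u (at t)) N + (\<i> * w) *s v t =
      edecay t *s poly_eta K (\<lambda>j. - ccross (shift_deriv U j) N + (\<i> * w) *s V j) t"
    unfolding du v_def poly_eta_add poly_eta_smult poly_eta_ccross poly_eta_neg
    by (simp add: coordinate_simps algebra_simps)
  then show "- ccross (vector_derivative u (at t)) N + (\<i> * w) *s v t = edecay t *s poly_eta K G t"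
    by (simp only: eq2)
qed

section \<open>Existence\<close>

lemma smooth_layer_coeffs:
  assumes N: "smooth N" and F: "\<And>j. smooth (F j)" and G: "\<And>j. smooth (G j)" and \<Phi>: "smooth \<Phi>"
  shows "smooth (\<lambda>x. layer_u w (N x) k (\<lambda>j. F j x) (\<lambda>j. G j x) (\<Phi> x) j)"
    and "smooth (\<lambda>x. layer_v w (N x) k (\<lambda>j. F j x) (\<lambda>j. G j x) (\<Phi> x) j)"
proof -
  have rhs: "smooth (\<lambda>x. layer_rhs w (N x) (\<lambda>j. F j x) (\<lambda>j. G j x) m)" for m
    unfolding layer_rhs_def shift_deriv_def
    by (intro smooth_diff smooth_ccross smooth_const_smult smooth_tang N F G)
  have tangential: "smooth (\<lambda>x. layer_tang w (N x) k (\<lambda>j. F j x) (\<lambda>j. G j x) (\<Phi> x) j)" for j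
  proof (cases "j = 0")
    case True then show ?thesis by (simp add: layer_tang_def smooth_ccross N \<Phi>)
  next
    case False then show ?thesis
      unfolding layer_tang_def by (simp add: smooth_const_smult smooth_rec_solution[OF rhs])
  qed
  show u: "smooth (\<lambda>x. layer_u w (N x) k (\<lambda>j. F j x) (\<lambda>j. G j x) (\<Phi> x) j)" for j
    unfolding layer_u_def
    by (intro smooth_add tangential smooth_smult smooth_cmult smooth_const smooth_dotc N F)
  show "smooth (\<lambda>x. layer_v w (N x) k (\<lambda>j. F j x) (\<lambda>j. G j x) (\<Phi> x) j)"
    unfolding layer_v_def shift_deriv_def
    by (intro smooth_const_smult smooth_add G smooth_ccross smooth_diff u N)
qed

lemma poly_class_coeffs:
  assumes "poly_class k \<Gamma> f"
  obtains F where "\<And>j. smooth (F j)" and "\<And>j x. j > k \<Longrightarrow> F j x = 0"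
    and "\<And>x \<eta>. x \<in> \<Gamma> \<Longrightarrow> \<eta> \<ge> 0 \<Longrightarrow> f x \<eta> = poly_eta k (\<lambda>j. F j x) \<eta>"
proof -
  obtain a where a: "\<forall>j\<le>k. smooth_on_surf \<Gamma> (a j)"
      "\<forall>x\<in>\<Gamma>. \<forall>\<eta>\<ge>0. f x \<eta> = (\<Sum>j\<le>k. (\<eta> ^ j) *\<^sub>R a j x)"
    using assms unfolding poly_class_def by blast
  obtain A where A: "\<And>j. j \<le> k \<Longrightarrow> smooth (A j) \<and> (\<forall>x\<in>\<Gamma>. a j x = A j x)"
    using a(1) unfolding smooth_on_surf_def by metis
  show ?thesis
  proof (rule that[of "\<lambda>j x. if j \<le> k then A j x else 0"])
    show "smooth (\<lambda>x. if j \<le> k then A j x else 0)" for j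
      using A[of j] by (cases "j \<le> k") (simp_all add: smooth_const)
  qed (use a(2) A in \<open>auto simp: poly_eta_def\<close>)
qed

lemma poly_class_poly_eta:
  assumes "\<And>j. smooth (c j)"
  shows "poly_class K \<Gamma> (\<lambda>x \<eta>. poly_eta K (\<lambda>j. c j x) \<eta>)"
  unfolding poly_class_def
proof (intro exI[of _ c] conjI allI impI ballI)
  show "smooth_on_surf \<Gamma> (c j)" for j unfolding smooth_on_surf_def using assms by blast
qed (simp add: poly_eta_def)

lemma smooth_surf_halfline_decaying_poly:
  assumes "\<And>j. smooth (c j)"
  shows "smooth_surf_halfline \<Gamma> (\<lambda>x \<eta>. edecay \<eta> *s poly_eta K (\<lambda>j. c j x) \<eta>)"
  unfolding smooth_surf_halfline_def
  by (rule exI[of _ "\<lambda>z. edecay (snd z) *s poly_eta K (\<lambda>j. c j (fst z)) (snd z)"])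
    (simp add: smooth_decaying_poly assms)

lemma existence:
  assumes n: "unit_normal_field \<Gamma> n" and \<omega>: "\<omega> > 0"
    and f: "poly_class k \<Gamma> f" and g: "poly_class k \<Gamma> g"
    and \<phi>: "smooth_on_surf \<Gamma> \<phi>" and \<phi>_tangential: "\<forall>x\<in>\<Gamma>. \<phi> x \<bullet> n x = 0"
  shows "\<exists>p q. poly_class (k + 1) \<Gamma> p \<and> poly_class (k + 1) \<Gamma> q \<and>
           is_solution \<Gamma> n \<omega> f g \<phi> (\<lambda>x \<eta>. edecay \<eta> *s p x \<eta>) (\<lambda>x \<eta>. edecay \<eta> *s q x \<eta>)"
proof -
  obtain N where N: "smooth N" "\<And>x. x \<in> \<Gamma> \<Longrightarrow> n x = N x"
    using n unfolding unit_normal_field_def smooth_on_surf_def by blast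
  have unit: "\<And>x. x \<in> \<Gamma> \<Longrightarrow> norm (n x) = 1"
    using n unfolding unit_normal_field_def by blast
  obtain \<Phi> where \<Phi>: "smooth \<Phi>" "\<And>x. x \<in> \<Gamma> \<Longrightarrow> \<phi> x = \<Phi> x"
    using \<phi> unfolding smooth_on_surf_def by blast
  obtain F where F: "\<And>j. smooth (F j)" "\<And>j x. j > k \<Longrightarrow> F j x = 0"
      "\<And>x \<eta>. x \<in> \<Gamma> \<Longrightarrow> \<eta> \<ge> 0 \<Longrightarrow> f x \<eta> = poly_eta k (\<lambda>j. F j x) \<eta>"
    using poly_class_coeffs[OF f] by blast
  obtain G where G: "\<And>j. smooth (G j)" "\<And>j x. j > k \<Longrightarrow> G j x = 0"
      "\<And>x \<eta>. x \<in> \<Gamma> \<Longrightarrow> \<eta> \<ge> 0 \<Longrightarrow> g x \<eta> = poly_eta k (\<lambda>j. G j x) \<eta>"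
    using poly_class_coeffs[OF g] by blast
  define w where "w = complex_of_real \<omega>"
  define U where "U j x = layer_u w (cvec (N x)) k (\<lambda>j. F j x) (\<lambda>j. G j x) (cvec (\<Phi> x)) j" for j x
  define V where "V j x = layer_v w (cvec (N x)) k (\<lambda>j. F j x) (\<lambda>j. G j x) (cvec (\<Phi> x)) j" for j x
  define p where "p x \<eta> = poly_eta (k + 1) (\<lambda>j. U j x) \<eta>" for x \<eta>
  define q where "q x \<eta> = poly_eta (k + 1) (\<lambda>j. V j x) \<eta>" for x \<eta>
  have smooth_UV: "smooth (U j)" "smooth (V j)" for j
    unfolding U_def V_def by (intro smooth_layer_coeffs smooth_cvec N \<Phi> F G)+
  have w: "w \<noteq> 0" using \<omega> by (simp add: w_def)
  have normal: "cvec (n x) = cvec (N x)" "dotc (cvec (N x)) (cvec (N x)) = 1" if "x \<in> \<Gamma>" for x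
    using N(2)[OF that] dotc_unit_normal[OF unit[OF that]] by auto
  have \<Phi>_tangential: "dotc (cvec (\<Phi> x)) (cvec (N x)) = 0" if "x \<in> \<Gamma>" for x
    using bspec[OF \<phi>_tangential that] N(2)[OF that] \<Phi>(2)[OF that] by (simp add: dotc_cvec)
  have coeffs: "ccross (shift_deriv (\<lambda>j. V j x) j) (cvec (N x)) + (1/w) *s U j x = F j x"
      "- ccross (shift_deriv (\<lambda>j. U j x) j) (cvec (N x)) + (\<i> * w) *s V j x = G j x"
      "ccross (U 0 x) (cvec (N x)) = cvec (\<Phi> x)"
      "U (Suc (k + 1)) x = 0" "V (Suc (k + 1)) x = 0"
    if "x \<in> \<Gamma>" for x j
  proof -
    have "\<And>m. m > k \<Longrightarrow> F m x = 0" "\<And>m. m > k \<Longrightarrow> G m x = 0" using F(2) G(2) by auto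
    note layer = layer_coefficients[OF normal(2)[OF that] w this \<Phi>_tangential[OF that]]
    show "ccross (shift_deriv (\<lambda>j. V j x) j) (cvec (N x)) + (1/w) *s U j x = F j x"
      unfolding U_def V_def by (rule layer(1))
    show "- ccross (shift_deriv (\<lambda>j. U j x) j) (cvec (N x)) + (\<i> * w) *s V j x = G j x"
      unfolding U_def V_def by (rule layer(2))
    show "ccross (U 0 x) (cvec (N x)) = cvec (\<Phi> x)"
      unfolding U_def by (rule layer(3))
    show "U (Suc (k + 1)) x = 0" "V (Suc (k + 1)) x = 0"
      unfolding U_def V_def by (rule layer; simp)+
  qed
  have extend: "f x \<eta> = poly_eta (k + 1) (\<lambda>j. F j x) \<eta>" "g x \<eta> = poly_eta (k + 1) (\<lambda>j. G j x) \<eta>"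
    if "x \<in> \<Gamma>" "\<eta> \<ge> 0" for x \<eta>
    using F(2,3) G(2,3) that poly_eta_Suc[of "\<lambda>j. F j x" k] poly_eta_Suc[of "\<lambda>j. G j x" k] by auto
  have solves: "ccross (vector_derivative (\<lambda>\<eta>. edecay \<eta> *s q x \<eta>) (at \<eta>)) (cvec (n x))
        + complex_of_real (1 / \<omega>) *s (edecay \<eta> *s p x \<eta>) = edecay \<eta> *s f x \<eta> \<and>
      - ccross (vector_derivative (\<lambda>\<eta>. edecay \<eta> *s p x \<eta>) (at \<eta>)) (cvec (n x))
        + (\<i> * complex_of_real \<omega>) *s (edecay \<eta> *s q x \<eta>) = edecay \<eta> *s g x \<eta>"
    if x: "x \<in> \<Gamma>" and "\<eta> > 0" for x \<eta>
    using decaying_poly_solution[of "\<lambda>j. U j x" "k + 1" "\<lambda>j. V j x" "cvec (N x)" w,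
        OF coeffs(4,5,1,2)[OF x]] extend[OF x] normal(1)[OF x] \<open>\<eta> > 0\<close>
    by (simp add: p_def q_def w_def)
  have boundary: "ccross (edecay 0 *s p x 0) (cvec (n x)) = cvec (\<phi> x)" if x: "x \<in> \<Gamma>" for x
    using coeffs(3)[OF x] normal(1)[OF x] \<Phi>(2)[OF x]
    by (simp add: p_def edecay_def poly_eta_at_0)
  have "is_solution \<Gamma> n \<omega> f g \<phi> (\<lambda>x \<eta>. edecay \<eta> *s p x \<eta>) (\<lambda>x \<eta>. edecay \<eta> *s q x \<eta>)"
    unfolding is_solution_def using solves boundary decaying_poly_L2
    by (simp add: p_def q_def smooth_surf_halfline_decaying_poly smooth_UV)
  then show ?thesis
    unfolding p_def q_def using poly_class_poly_eta[of U] poly_class_poly_eta[of V] smooth_UV by blast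
qed

section \<open>Uniqueness\<close>

lemma halfline_constant:
  fixes F :: "real \<Rightarrow> 'a::banach"
  assumes cont: "continuous_on {0..} F"
    and deriv: "\<And>\<eta>. \<eta> > 0 \<Longrightarrow> (F has_vector_derivative 0) (at \<eta>)"
    and t: "t \<ge> 0"
  shows "F t = F 0"
proof (cases "t = 0")
  case False
  then have t: "t > 0" using t by simp
  show ?thesis
  proof (rule has_derivative_zero_unique_strong_interval[of "{0,t}" 0 t F "F 0" t])
    show "continuous_on {0..t} F" by (rule continuous_on_subset[OF cont]) auto
  next
    fix x assume "x \<in> {0..t} - {0, t}"
    then have "(F has_derivative (\<lambda>h. 0)) (at x)"
      using deriv[of x] unfolding has_vector_derivative_def by simp
    then show "(F has_derivative (\<lambda>h. 0)) (at x within {0..t})"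
      by (rule has_derivative_at_withinI)
  qed (use t in auto)
qed simp

lemma halfline_exponential:
  fixes A :: "real \<Rightarrow> complex^3"
  assumes cont: "continuous_on {0..} A"
    and deriv: "\<And>\<eta>. \<eta> > 0 \<Longrightarrow> (A has_vector_derivative (a *s A \<eta>)) (at \<eta>)"
    and t: "t \<ge> 0"
  shows "exp (- a * complex_of_real t) *s A t = A 0"
proof -
  define F where "F = (\<lambda>\<eta>. exp (- a * complex_of_real \<eta>) *s A \<eta>)"
  have "F t = F 0"
  proof (rule halfline_constant[OF _ _ t])
    show "continuous_on {0..} F" unfolding F_def
      by (rule bounded_bilinear.continuous_on[OF bounded_bilinear_smult _ cont])
        (intro continuous_intros)
  next
    fix \<eta> :: real assume "\<eta> > 0"
    from bounded_bilinear.has_vector_derivative[OF bounded_bilinear_smult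
        cexp_deriv[of "- a" \<eta>] deriv[OF this]]
    show "(F has_vector_derivative 0) (at \<eta>)"
      unfolding F_def by (simp add: coordinate_simps algebra_simps)
  qed
  then show ?thesis by (simp add: F_def)
qed

lemma homogeneous_modes:
  fixes w z wd zd :: "real \<Rightarrow> complex^3"
  assumes NN: "dotc N N = 1" and \<omega>: "\<omega> > 0" and \<eta>: "\<eta> > 0"
    and dw: "(w has_vector_derivative wd \<eta>) (at \<eta>)"
    and dz: "(z has_vector_derivative zd \<eta>) (at \<eta>)"
    and eq1: "ccross (zd \<eta>) N + complex_of_real (1/\<omega>) *s w \<eta> = 0"
    and eq2: "- ccross (wd \<eta>) N + (\<i> * complex_of_real \<omega>) *s z \<eta> = 0"
  defines "c \<equiv> sqrt_i * complex_of_real \<omega>"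
  defines "A \<equiv> \<lambda>\<eta>. tang N (w \<eta>) + c *s ccross (z \<eta>) N"
    and "B \<equiv> \<lambda>\<eta>. tang N (w \<eta>) - c *s ccross (z \<eta>) N"
  shows "tang N (w \<eta>) = w \<eta>"
    and "(A has_vector_derivative (- sqrt_i) *s A \<eta>) (at \<eta>)"
    and "(B has_vector_derivative sqrt_i *s B \<eta>) (at \<eta>)"
proof -
  define wc where "wc = complex_of_real \<omega>"
  have wc: "wc \<noteq> 0" using \<omega> by (simp add: wc_def)
  have zd: "ccross (zd \<eta>) N = - (1/wc) *s w \<eta>"
    using eq1 unfolding wc_def by (simp add: eq_neg_iff_add_eq_0 vector_smult_lneg)
  have wd: "ccross (wd \<eta>) N = (sqrt_i * sqrt_i * wc) *s z \<eta>"
    using eq2 unfolding wc_def sqrt_i_sq by (simp add: algebra_simps)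
  have "- (1/wc) * dotc (w \<eta>) N = 0"
    using dotc_ccross[of "zd \<eta>" N] unfolding zd dotc_smult .
  then show tangential: "tang N (w \<eta>) = w \<eta>" using wc by (simp add: tang_def)
  have tang_wd: "tang N (wd \<eta>) = - (sqrt_i * sqrt_i * wc) *s ccross (z \<eta>) N"
    unfolding tang_as_ccross[OF NN] wd ccross_smult by (simp add: vector_smult_lneg)
  have d_tang: "((\<lambda>\<eta>. tang N (w \<eta>)) has_vector_derivative tang N (wd \<eta>)) (at \<eta>)"
    by (rule bounded_linear.has_vector_derivative[OF bounded_linear_tang dw])
  have d_cross: "((\<lambda>\<eta>. c *s ccross (z \<eta>) N) has_vector_derivative c *s ccross (zd \<eta>) N) (at \<eta>)"
    by (intro bounded_linear.has_vector_derivative[OF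
          bounded_bilinear.bounded_linear_right[OF bounded_bilinear_smult]]
        bounded_linear.has_vector_derivative[OF
          bounded_bilinear.bounded_linear_left[OF bounded_bilinear_ccross] dz])
  have "(A has_vector_derivative (tang N (wd \<eta>) + c *s ccross (zd \<eta>) N)) (at \<eta>)"
    unfolding A_def by (rule has_vector_derivative_add[OF d_tang d_cross])
  moreover have "tang N (wd \<eta>) + c *s ccross (zd \<eta>) N = (- sqrt_i) *s A \<eta>"
    unfolding tang_wd zd A_def tangential c_def wc_def[symmetric] using wc
    by (simp add: vec_eq_iff field_simps)
  ultimately show "(A has_vector_derivative (- sqrt_i) *s A \<eta>) (at \<eta>)" by simp
  have "(B has_vector_derivative (tang N (wd \<eta>) - c *s ccross (zd \<eta>) N)) (at \<eta>)"
    unfolding B_def by (rule has_vector_derivative_diff[OF d_tang d_cross])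
  moreover have "tang N (wd \<eta>) - c *s ccross (zd \<eta>) N = sqrt_i *s B \<eta>"
    unfolding tang_wd zd B_def tangential c_def wc_def[symmetric] using wc
    by (simp add: vec_eq_iff field_simps)
  ultimately show "(B has_vector_derivative sqrt_i *s B \<eta>) (at \<eta>)" by simp
qed

text \<open>The homogeneous problem has only the trivial square integrable solution: the growing
  mode B vanishes by square integrability, the decaying mode A by the boundary condition.\<close>

lemma homogeneous_zero:
  fixes w z wd zd :: "real \<Rightarrow> complex^3"
  assumes NN: "dotc N N = 1" and unit: "norm N = 1" and \<omega>: "\<omega> > 0"
    and cw: "continuous_on {0..} w" and cz: "continuous_on {0..} z"
    and dw: "\<And>\<eta>. \<eta> > 0 \<Longrightarrow> (w has_vector_derivative wd \<eta>) (at \<eta>)"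
    and dz: "\<And>\<eta>. \<eta> > 0 \<Longrightarrow> (z has_vector_derivative zd \<eta>) (at \<eta>)"
    and eq1: "\<And>\<eta>. \<eta> > 0 \<Longrightarrow> ccross (zd \<eta>) N + complex_of_real (1/\<omega>) *s w \<eta> = 0"
    and eq2: "\<And>\<eta>. \<eta> > 0 \<Longrightarrow> - ccross (wd \<eta>) N + (\<i> * complex_of_real \<omega>) *s z \<eta> = 0"
    and boundary: "ccross (w 0) N = 0"
    and L2: "\<And>c. c \<ge> 0 \<Longrightarrow>
      (\<integral>\<^sup>+ \<eta>\<in>{0..}. ennreal ((norm (w \<eta>) + c * norm (z \<eta>))\<^sup>2) \<partial>lborel) < \<infinity>"
    and t: "t \<ge> 0"
  shows "w t = 0 \<and> z t = 0"
proof -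
  define c where "c = sqrt_i * complex_of_real \<omega>"
  define A where "A = (\<lambda>\<eta>. tang N (w \<eta>) + c *s ccross (z \<eta>) N)"
  define B where "B = (\<lambda>\<eta>. tang N (w \<eta>) - c *s ccross (z \<eta>) N)"
  have c: "c \<noteq> 0" "norm c = \<omega>" using \<omega> sqrt_i_nonzero by (auto simp: c_def norm_mult norm_sqrt_i)
  have modes: "tang N (w \<eta>) = w \<eta>" "(A has_vector_derivative (- sqrt_i) *s A \<eta>) (at \<eta>)"
      "(B has_vector_derivative sqrt_i *s B \<eta>) (at \<eta>)" if "\<eta> > 0" for \<eta>
    using homogeneous_modes[where wd=wd and zd=zd, OF NN \<omega> that dw[OF that] dz[OF that] eq1[OF that] eq2[OF that]]
    unfolding A_def B_def c_def by blast+
  have cont_tang: "continuous_on {0..} (\<lambda>\<eta>. tang N (w \<eta>))"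
    by (rule bounded_linear.continuous_on[OF bounded_linear_tang cw])
  have cont_cross: "continuous_on {0..} (\<lambda>\<eta>. c *s ccross (z \<eta>) N)"
    by (intro bounded_linear.continuous_on[OF bounded_bilinear.bounded_linear_right[OF
          bounded_bilinear_smult]] bounded_linear.continuous_on[OF
          bounded_bilinear.bounded_linear_left[OF bounded_bilinear_ccross] cz])
  have A_exp: "exp (sqrt_i * complex_of_real \<eta>) *s A \<eta> = A 0" if "\<eta> \<ge> 0" for \<eta>
    using halfline_exponential[of A "- sqrt_i", OF _ modes(2) that] cont_tang cont_cross
    unfolding A_def by (simp add: continuous_on_add)
  have B_exp: "edecay \<eta> *s B \<eta> = B 0" if "\<eta> \<ge> 0" for \<eta>
    using halfline_exponential[of B sqrt_i, OF _ modes(3) that] cont_tang cont_cross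
    unfolding B_def edecay_def by (simp add: continuous_on_diff)
  obtain K where K: "K > 0" "\<And>a b. norm (ccross a b) \<le> norm a * norm b * K"
    using bounded_bilinear.pos_bounded[OF bounded_bilinear_ccross] by blast
  have "B 0 = 0"
  proof (rule dominated_constant_zero)
    fix \<eta> :: real assume "\<eta> > 0"
    have "norm (B 0) = norm (edecay \<eta>) * norm (B \<eta>)"
      unfolding B_exp[of \<eta>, symmetric, OF less_imp_le[OF \<open>\<eta> > 0\<close>]] by (rule norm_smult)
    also have "\<dots> \<le> norm (B \<eta>)"
      using \<open>\<eta> > 0\<close> by (intro mult_left_le_one_le) (auto simp: norm_edecay)
    also have "\<dots> \<le> norm (w \<eta>) + norm (c *s ccross (z \<eta>) N)"
      unfolding B_def modes(1)[OF \<open>\<eta> > 0\<close>] by (rule norm_triangle_ineq4)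
    also have "\<dots> \<le> norm (w \<eta>) + (\<omega> * K) * norm (z \<eta>)"
      using K(2)[of "z \<eta>" N] unit \<omega> by (simp add: norm_smult c mult_left_mono algebra_simps)
    finally show "norm (B 0) \<le> norm (w \<eta>) + (\<omega> * K) * norm (z \<eta>)" .
  qed (use L2[of "\<omega> * K"] \<omega> K in simp)
  moreover have tang_w0: "tang N (w 0) = 0" unfolding tang_as_ccross[OF NN] boundary by simp
  ultimately have "ccross (z 0) N = 0" using c by (simp add: B_def)
  then have "A 0 = 0" by (simp add: A_def tang_w0)
  have w_pos: "w \<eta> = 0" if "\<eta> > 0" for \<eta>
  proof -
    have "A \<eta> = 0" "B \<eta> = 0"
      using A_exp[of \<eta>] B_exp[of \<eta>] \<open>A 0 = 0\<close> \<open>B 0 = 0\<close> that by (simp_all add: edecay_def)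
    moreover have "A \<eta> + B \<eta> = 2 *s tang N (w \<eta>)"
      unfolding A_def B_def by (simp add: vec_eq_iff)
    ultimately show ?thesis using modes(1)[OF that] by simp
  qed
  have z_pos: "z \<eta> = 0" if "\<eta> > 0" for \<eta>
  proof -
    have "(w has_vector_derivative 0) (at \<eta>)"
      by (rule has_vector_derivative_transform_within_open[of "\<lambda>_. 0" _ _ "{0<..}"])
        (use that w_pos in auto)
    then have "wd \<eta> = 0" using vector_derivative_unique_at[OF dw[OF that]] by simp
    then show ?thesis using eq2[OF that] \<omega> by simp
  qed
  have "w 0 = 0" "z 0 = 0"
    using continuous_constant_on_closure[of "{0<..}" w 0 0]
      continuous_constant_on_closure[of "{0<..}" z 0 0] cw cz w_pos z_pos by auto
  then show ?thesis using t w_pos z_pos by (cases "t = 0") auto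
qed

text \<open>Square integrability on the half-line, including the measurability that the
  comparison of nonnegative integrals needs.\<close>

definition square_integrable_halfline :: "(real \<Rightarrow> 'a::real_normed_vector) \<Rightarrow> bool" where
  "square_integrable_halfline a \<longleftrightarrow>
     (\<lambda>\<eta>. ennreal ((norm (a \<eta>))\<^sup>2) * indicator {0..} \<eta>) \<in> borel_measurable lborel \<and>
     (\<integral>\<^sup>+ \<eta>\<in>{0..}. ennreal ((norm (a \<eta>))\<^sup>2) \<partial>lborel) < \<infinity>"

lemma sum_squares_bound: "((p::real) + q + r + s)\<^sup>2 \<le> 4 * (p\<^sup>2 + q\<^sup>2 + r\<^sup>2 + s\<^sup>2)"
proof -
  have "4 * (p\<^sup>2 + q\<^sup>2 + r\<^sup>2 + s\<^sup>2) - (p + q + r + s)\<^sup>2 =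
     (p-q)\<^sup>2 + (p-r)\<^sup>2 + (p-s)\<^sup>2 + (q-r)\<^sup>2 + (q-s)\<^sup>2 + (r-s)\<^sup>2"
    by (simp add: power2_eq_square algebra_simps)
  moreover have "0 \<le> (p-q)\<^sup>2 + (p-r)\<^sup>2 + (p-s)\<^sup>2 + (q-r)\<^sup>2 + (q-s)\<^sup>2 + (r-s)\<^sup>2" by simp
  ultimately show ?thesis by linarith
qed

lemma square_integrable_difference:
  fixes a a' b b' :: "real \<Rightarrow> 'a::real_normed_vector"
  assumes "square_integrable_halfline a" "square_integrable_halfline a'"
    and "square_integrable_halfline b" "square_integrable_halfline b'" and c: "c \<ge> 0"
  shows "(\<integral>\<^sup>+ \<eta>\<in>{0..}. ennreal ((norm (a \<eta> - a' \<eta>) + c * norm (b \<eta> - b' \<eta>))\<^sup>2) \<partial>lborel) < \<infinity>"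
proof -
  define S where "S d \<eta> = ennreal ((norm (d \<eta>))\<^sup>2) * indicator {0..} \<eta>" for d :: "real \<Rightarrow> 'a" and \<eta>
  define c4 where "c4 = ennreal (4 * c\<^sup>2)"
  have pointwise: "ennreal ((norm (a \<eta> - a' \<eta>) + c * norm (b \<eta> - b' \<eta>))\<^sup>2) * indicator {0..} \<eta>
     \<le> 4 * S a \<eta> + 4 * S a' \<eta> + c4 * S b \<eta> + c4 * S b' \<eta>" for \<eta>
  proof (cases "\<eta> \<ge> 0")
    case True
    have "norm (a \<eta> - a' \<eta>) + c * norm (b \<eta> - b' \<eta>)
        \<le> norm (a \<eta>) + norm (a' \<eta>) + c * norm (b \<eta>) + c * norm (b' \<eta>)"
      using norm_triangle_ineq4[of "a \<eta>" "a' \<eta>"] norm_triangle_ineq4[of "b \<eta>" "b' \<eta>"] c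
      by (smt (verit) mult_left_mono distrib_left)
    then have "(norm (a \<eta> - a' \<eta>) + c * norm (b \<eta> - b' \<eta>))\<^sup>2
        \<le> (norm (a \<eta>) + norm (a' \<eta>) + c * norm (b \<eta>) + c * norm (b' \<eta>))\<^sup>2"
      using c by (intro power_mono) auto
    also have "\<dots> \<le> 4 * (norm (a \<eta>))\<^sup>2 + 4 * (norm (a' \<eta>))\<^sup>2
        + (4 * c\<^sup>2) * (norm (b \<eta>))\<^sup>2 + (4 * c\<^sup>2) * (norm (b' \<eta>))\<^sup>2"
      using sum_squares_bound[of "norm (a \<eta>)" "norm (a' \<eta>)" "c * norm (b \<eta>)" "c * norm (b' \<eta>)"]
      by (simp add: power_mult_distrib algebra_simps)
    finally have "ennreal ((norm (a \<eta> - a' \<eta>) + c * norm (b \<eta> - b' \<eta>))\<^sup>2) \<le> ennreal (\<dots>)"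
      by (rule ennreal_leI)
    also have "\<dots> = 4 * ennreal ((norm (a \<eta>))\<^sup>2) + 4 * ennreal ((norm (a' \<eta>))\<^sup>2)
        + c4 * ennreal ((norm (b \<eta>))\<^sup>2) + c4 * ennreal ((norm (b' \<eta>))\<^sup>2)"
      unfolding c4_def by (simp add: ennreal_mult')
    finally show ?thesis using True by (simp add: S_def)
  qed (simp add: S_def)
  have measurable: "S d \<in> borel_measurable lborel" if "d \<in> {a, a', b, b'}" for d
    using that assms unfolding S_def square_integrable_halfline_def by auto
  have "(\<integral>\<^sup>+ \<eta>\<in>{0..}. ennreal ((norm (a \<eta> - a' \<eta>) + c * norm (b \<eta> - b' \<eta>))\<^sup>2) \<partial>lborel)
      \<le> (\<integral>\<^sup>+ \<eta>. 4 * S a \<eta> + 4 * S a' \<eta> + c4 * S b \<eta> + c4 * S b' \<eta> \<partial>lborel)"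
    by (rule nn_integral_mono) (rule pointwise)
  also have "\<dots> = 4 * integral\<^sup>N lborel (S a) + 4 * integral\<^sup>N lborel (S a')
      + c4 * integral\<^sup>N lborel (S b) + c4 * integral\<^sup>N lborel (S b')"
    using measurable by (simp add: nn_integral_add nn_integral_cmult)
  also have "\<dots> < \<infinity>"
    using assms unfolding S_def c4_def square_integrable_halfline_def
    by (simp add: ennreal_mult_less_top)
  finally show ?thesis .
qed

lemma smooth_surf_halfline_slice:
  fixes u :: "real^3 \<Rightarrow> real \<Rightarrow> 'b::euclidean_space"
  assumes "smooth_surf_halfline \<Gamma> u" and x: "x \<in> \<Gamma>"
  shows "continuous_on {0..} (u x)"
    and "\<And>\<eta>. \<eta> > 0 \<Longrightarrow> (u x has_vector_derivative vector_derivative (u x) (at \<eta>)) (at \<eta>)"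
    and "(\<lambda>\<eta>. ennreal ((norm (u x \<eta>))\<^sup>2) * indicator {0..} \<eta>) \<in> borel_measurable lborel"
proof -
  obtain U :: "(real^3) \<times> real \<Rightarrow> 'b" where U: "smooth U"
    "\<And>x \<eta>. x \<in> \<Gamma> \<Longrightarrow> \<eta> \<ge> 0 \<Longrightarrow> u x \<eta> = U (x, \<eta>)"
    using assms(1) unfolding smooth_surf_halfline_def by blast
  define Ux where "Ux = (\<lambda>\<eta>. U (x, \<eta>))"
  have diff: "Ux differentiable (at \<eta>)" for \<eta>
  proof -
    have "(\<lambda>\<eta>::real. (x, \<eta>)) differentiable (at \<eta>)"
      unfolding differentiable_def by (auto intro!: derivative_eq_intros)
    from differentiable_chain_at[OF this smooth_differentiable[OF U(1)]] show ?thesis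
      unfolding Ux_def by (simp add: o_def)
  qed
  have cont: "continuous_on UNIV Ux"
    using diff by (intro differentiable_imp_continuous_on differentiable_at_imp_differentiable_on) auto
  have eq: "u x \<eta> = Ux \<eta>" if "\<eta> \<ge> 0" for \<eta> unfolding Ux_def using U(2)[OF x that] .
  show "continuous_on {0..} (u x)"
    by (rule continuous_on_eq[OF continuous_on_subset[OF cont]]) (auto simp: eq)
  show "(u x has_vector_derivative vector_derivative (u x) (at \<eta>)) (at \<eta>)" if "\<eta> > 0" for \<eta>
  proof -
    have "(Ux has_vector_derivative vector_derivative Ux (at \<eta>)) (at \<eta>)"
      using diff vector_derivative_works by blast
    then have "(u x has_vector_derivative vector_derivative Ux (at \<eta>)) (at \<eta>)"
      by (rule has_vector_derivative_transform_within_open[of _ _ _ "{0<..}"]) (use that eq in auto)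
    then show ?thesis using vector_derivative_at by fastforce
  qed
  have "(\<lambda>\<eta>. ennreal ((norm (Ux \<eta>))\<^sup>2) * indicator {0..} \<eta>) \<in> borel_measurable borel"
    using borel_measurable_continuous_onI[OF cont] by measurable
  moreover have "(\<lambda>\<eta>. ennreal ((norm (u x \<eta>))\<^sup>2) * indicator {0..} \<eta>) =
      (\<lambda>\<eta>. ennreal ((norm (Ux \<eta>))\<^sup>2) * indicator {0..} \<eta>)"
    by (auto simp: fun_eq_iff indicator_def eq)
  ultimately show "(\<lambda>\<eta>. ennreal ((norm (u x \<eta>))\<^sup>2) * indicator {0..} \<eta>) \<in> borel_measurable lborel"
    by simp
qed

lemma solution_slice:
  assumes sol: "is_solution \<Gamma> n \<omega> f g \<phi> u v" and x: "x \<in> \<Gamma>"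
  shows "continuous_on {0..} (u x)" "continuous_on {0..} (v x)"
    and "\<And>\<eta>. \<eta> > 0 \<Longrightarrow> (u x has_vector_derivative vector_derivative (u x) (at \<eta>)) (at \<eta>)"
    and "\<And>\<eta>. \<eta> > 0 \<Longrightarrow> (v x has_vector_derivative vector_derivative (v x) (at \<eta>)) (at \<eta>)"
    and "square_integrable_halfline (u x)" "square_integrable_halfline (v x)"
proof -
  have smooth: "smooth_surf_halfline \<Gamma> u" "smooth_surf_halfline \<Gamma> v"
    and finite: "(\<integral>\<^sup>+ \<eta>\<in>{0..}. ennreal ((norm (u x \<eta>))\<^sup>2) \<partial>lborel) < \<infinity>"
      "(\<integral>\<^sup>+ \<eta>\<in>{0..}. ennreal ((norm (v x \<eta>))\<^sup>2) \<partial>lborel) < \<infinity>"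
    using sol x unfolding is_solution_def by blast+
  note slice_u = smooth_surf_halfline_slice[OF smooth(1) x]
    and slice_v = smooth_surf_halfline_slice[OF smooth(2) x]
  show "continuous_on {0..} (u x)" "continuous_on {0..} (v x)"
    "\<And>\<eta>. \<eta> > 0 \<Longrightarrow> (u x has_vector_derivative vector_derivative (u x) (at \<eta>)) (at \<eta>)"
    "\<And>\<eta>. \<eta> > 0 \<Longrightarrow> (v x has_vector_derivative vector_derivative (v x) (at \<eta>)) (at \<eta>)"
    by (fact slice_u(1) slice_v(1) slice_u(2) slice_v(2))+
  show "square_integrable_halfline (u x)" "square_integrable_halfline (v x)"
    unfolding square_integrable_halfline_def using slice_u(3) slice_v(3) finite by blast+
qed

lemma uniqueness:
  assumes unit: "\<forall>x\<in>\<Gamma>. norm (n x) = 1" and \<omega>: "\<omega> > 0"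
    and sol: "is_solution \<Gamma> n \<omega> f g \<phi> u v" and sol': "is_solution \<Gamma> n \<omega> f g \<phi> u' v'"
    and x: "x \<in> \<Gamma>" and t: "t \<ge> 0"
  shows "u x t = u' x t \<and> v x t = v' x t"
proof -
  define N where "N = cvec (n x)"
  have N: "dotc N N = 1" "norm N = 1"
    using unit x by (auto simp: N_def dotc_unit_normal norm_cvec)
  note slice = solution_slice[OF sol x] and slice' = solution_slice[OF sol' x]
  have eq: "ccross (vector_derivative (v x) (at \<eta>)) N + complex_of_real (1 / \<omega>) *s u x \<eta>
          = edecay \<eta> *s f x \<eta>"
      "- ccross (vector_derivative (u x) (at \<eta>)) N + (\<i> * complex_of_real \<omega>) *s v x \<eta>
          = edecay \<eta> *s g x \<eta>"
      "ccross (vector_derivative (v' x) (at \<eta>)) N + complex_of_real (1 / \<omega>) *s u' x \<eta>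
          = edecay \<eta> *s f x \<eta>"
      "- ccross (vector_derivative (u' x) (at \<eta>)) N + (\<i> * complex_of_real \<omega>) *s v' x \<eta>
          = edecay \<eta> *s g x \<eta>" if "\<eta> > 0" for \<eta>
    using sol sol' x that unfolding is_solution_def N_def by blast+
  have boundary: "ccross (u x 0) N = ccross (u' x 0) N"
    using sol sol' x unfolding is_solution_def N_def by simp
  have "(\<lambda>\<eta>. u x \<eta> - u' x \<eta>) t = 0 \<and> (\<lambda>\<eta>. v x \<eta> - v' x \<eta>) t = 0"
  proof (rule homogeneous_zero[OF N \<omega> continuous_on_diff[OF slice(1) slice'(1)]
        continuous_on_diff[OF slice(2) slice'(2)]
        has_vector_derivative_diff[OF slice(3) slice'(3)]
        has_vector_derivative_diff[OF slice(4) slice'(4)] _ _ _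
        square_integrable_difference[OF slice(5) slice'(5) slice(6) slice'(6)] t])
    fix \<eta> :: real assume "\<eta> > 0"
    show "ccross (vector_derivative (v x) (at \<eta>) - vector_derivative (v' x) (at \<eta>)) N
        + complex_of_real (1/\<omega>) *s (u x \<eta> - u' x \<eta>) = 0"
      using eq(1,3)[OF \<open>\<eta> > 0\<close>] by (simp add: ccross_diff vector_ssub_ldistrib algebra_simps)
    show "- ccross (vector_derivative (u x) (at \<eta>) - vector_derivative (u' x) (at \<eta>)) N
        + (\<i> * complex_of_real \<omega>) *s (v x \<eta> - v' x \<eta>) = 0"
      using eq(2,4)[OF \<open>\<eta> > 0\<close>] by (simp add: ccross_diff vector_ssub_ldistrib algebra_simps)
  next
    show "ccross (u x 0 - u' x 0) N = 0" using boundary by (simp add: ccross_diff)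
  qed
  then show ?thesis by simp
qed

theorem lemma4p1:
  fixes \<Gamma> :: "(real^3) set" and n :: "real^3 \<Rightarrow> real^3" and \<omega> :: real and k :: nat
    and f g :: "real^3 \<Rightarrow> real \<Rightarrow> complex^3" and \<phi> :: "real^3 \<Rightarrow> real^3"
  assumes "smooth_closed_surface \<Gamma>" and "unit_normal_field \<Gamma> n" and "\<omega> > 0"
    and "poly_class k \<Gamma> f" and "poly_class k \<Gamma> g"
    and "smooth_on_surf \<Gamma> \<phi>" and "\<forall>x\<in>\<Gamma>. \<phi> x \<bullet> n x = 0"
  shows "(\<exists>u v. is_solution \<Gamma> n \<omega> f g \<phi> u v) \<and>
         (\<forall>u v u' v'. is_solution \<Gamma> n \<omega> f g \<phi> u v \<longrightarrow> is_solution \<Gamma> n \<omega> f g \<phi> u' v' \<longrightarrow>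
             (\<forall>x\<in>\<Gamma>. \<forall>\<eta>\<ge>0. u x \<eta> = u' x \<eta> \<and> v x \<eta> = v' x \<eta>)) \<and>
         (\<forall>u v. is_solution \<Gamma> n \<omega> f g \<phi> u v \<longrightarrow>
             (\<exists>p q. poly_class (k + 1) \<Gamma> p \<and> poly_class (k + 1) \<Gamma> q \<and>
                (\<forall>x\<in>\<Gamma>. \<forall>\<eta>\<ge>0. u x \<eta> = edecay \<eta> *s p x \<eta> \<and> v x \<eta> = edecay \<eta> *s q x \<eta>)))"
proof -
  obtain p q where pq: "poly_class (k + 1) \<Gamma> p" "poly_class (k + 1) \<Gamma> q"
      and sol: "is_solution \<Gamma> n \<omega> f g \<phi> (\<lambda>x \<eta>. edecay \<eta> *s p x \<eta>) (\<lambda>x \<eta>. edecay \<eta> *s q x \<eta>)"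
    using existence[OF assms(2-7)] by blast
  have unit: "\<forall>x\<in>\<Gamma>. norm (n x) = 1"
    using assms(2) unfolding unit_normal_field_def by blast
  have unique: "u x \<eta> = u' x \<eta> \<and> v x \<eta> = v' x \<eta>"
    if "is_solution \<Gamma> n \<omega> f g \<phi> u v" "is_solution \<Gamma> n \<omega> f g \<phi> u' v'" "x \<in> \<Gamma>" "\<eta> \<ge> 0"
    for u v u' v' x \<eta>
    by (rule uniqueness[OF unit assms(3) that])
  show ?thesis
  proof (intro conjI)
    show "\<exists>u v. is_solution \<Gamma> n \<omega> f g \<phi> u v" using sol by blast
    show "\<forall>u v u' v'. is_solution \<Gamma> n \<omega> f g \<phi> u v \<longrightarrow> is_solution \<Gamma> n \<omega> f g \<phi> u' v' \<longrightarrow>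
        (\<forall>x\<in>\<Gamma>. \<forall>\<eta>\<ge>0. u x \<eta> = u' x \<eta> \<and> v x \<eta> = v' x \<eta>)"
      using unique by simp
    show "\<forall>u v. is_solution \<Gamma> n \<omega> f g \<phi> u v \<longrightarrow>
        (\<exists>p q. poly_class (k + 1) \<Gamma> p \<and> poly_class (k + 1) \<Gamma> q \<and>
          (\<forall>x\<in>\<Gamma>. \<forall>\<eta>\<ge>0. u x \<eta> = edecay \<eta> *s p x \<eta> \<and> v x \<eta> = edecay \<eta> *s q x \<eta>))"
      using pq unique[OF _ sol] by blast
  qed
qed
end
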